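(* For all $G,G'\in c(\mathbb Z_{\ge0},C(\mathbb Z_s))$, $$T_W(G)T_W(G')-T_W(GG')\in\mathcal K(H)_{\mathrm{inv}}.$$
   Context: Fix an integer $s\ge2$; $\mathbb Z_s$ is the compact ring of $s$-adic integers. Let $\mathcal V=\{(n,x): n\in\mathbb Z_{\ge0},\ x\in\mathbb Z,\ 0\le x<s^n\}$, $H=\ell^2(\mathcal V)$ with orthonormal basis $\{E_{(n,x)}\}$, $M_fE_{(n,x)}=f(x)E_{(n,x)}$. The Serre shift is the isometry $WE_{(n,x)}=\frac1{\sqrt s}\sum_{j=0}^{s-1}E_{(n+1,x+js^n)}$. Let $\mathcal P_0=I-WW^*$ and $\mathcal P_n=W^n\mathcal P_0(W^* )^n$ (mutually orthogonal projections). $c(\mathbb Z_{\ge0},C(\mathbb Z_s))\cong c(\mathbb Z_{\ge0})\otimes C(\mathbb Z_s)$ is the C$^*$-algebra of sequences $G=(g_n)_{n\ge0}$ in $C(\mathbb Z_s)$ converging uniformly to $g_\infty$, with pointwise product. $T_W(G)=\sum_{n=0}^\infty\mathcal P_n(M_{g_n}-M_{g_\infty})\mathcal P_n+M_{g_\infty}$ (norm convergent). $\mathcal K(H)_{\mathrm{inv}}$ is the set of compact operators fixed by the gauge action $\rho_\theta(a)=\mathcal U_\theta a\,\mathcal U_\theta^{-1}$, $\mathcal U_\theta E_{(n,x)}=e^{2\pi in\theta}E_{(n,x)}$. *)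

theory Defs
  imports "HOL-Analysis.Analysis"
begin

text \<open>Z_s is modelled as digit sequences (i-th s-adic digit), i.e. the product of countably
many copies of the discrete space {0..<s}, with the product topology.\<close>

definition Zs_top :: "nat \<Rightarrow> (nat \<Rightarrow> nat) topology" where
  "Zs_top s = product_topology (\<lambda>_. discrete_topology {..<s}) UNIV"

definition zs_of :: "nat \<Rightarrow> nat \<Rightarrow> (nat \<Rightarrow> nat)" where
  "zs_of s x = (\<lambda>i. (x div s ^ i) mod s)"

definition cseq :: "nat \<Rightarrow> (nat \<Rightarrow> (nat \<Rightarrow> nat) \<Rightarrow> complex) \<Rightarrow> bool" where
  "cseq s g \<longleftrightarrow> (\<forall>n. continuous_map (Zs_top s) euclidean (g n)) \<and>
     (\<exists>L. continuous_map (Zs_top s) euclidean L \<and>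
        (\<forall>e>0. \<exists>N. \<forall>n\<ge>N. \<forall>z\<in>topspace (Zs_top s). cmod (g n z - L z) < e))"

definition glim :: "(nat \<Rightarrow> (nat \<Rightarrow> nat) \<Rightarrow> complex) \<Rightarrow> (nat \<Rightarrow> nat) \<Rightarrow> complex" where
  "glim g = (\<lambda>z. lim (\<lambda>n. g n z))"

definition Vset :: "nat \<Rightarrow> (nat \<times> nat) set" where
  "Vset s = {(n, x). x < s ^ n}"

definition inH :: "nat \<Rightarrow> (nat \<times> nat \<Rightarrow> complex) \<Rightarrow> bool" where
  "inH s v \<longleftrightarrow> (\<forall>p. p \<notin> Vset s \<longrightarrow> v p = 0) \<and> (\<lambda>p. (cmod (v p))\<^sup>2) summable_on UNIV"

definition l2norm :: "(nat \<times> nat \<Rightarrow> complex) \<Rightarrow> real" where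
  "l2norm v = sqrt (\<Sum>\<^sub>\<infinity>p. (cmod (v p))\<^sup>2)"

type_synonym op = "(nat \<times> nat \<Rightarrow> complex) \<Rightarrow> (nat \<times> nat \<Rightarrow> complex)"

text \<open>Serre shift W (coordinate form of W E_(n,x) = s^(-1/2) \<Sum>_j E_(n+1, x + j s^n))
and its adjoint W*.\<close>
definition Wop :: "nat \<Rightarrow> op" where
  "Wop s v = (\<lambda>(m, y). if m = 0 \<or> s ^ m \<le> y then 0
                       else v (m - 1, y mod s ^ (m - 1)) / complex_of_real (sqrt (real s)))"

definition Wadj :: "nat \<Rightarrow> op" where
  "Wadj s v = (\<lambda>(n, x). if s ^ n \<le> x then 0
                       else (\<Sum>j<s. v (n + 1, x + j * s ^ n)) / complex_of_real (sqrt (real s)))"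

definition P0 :: "nat \<Rightarrow> op" where
  "P0 s v = v - Wop s (Wadj s v)"

definition Pn :: "nat \<Rightarrow> nat \<Rightarrow> op" where
  "Pn s n = (Wop s ^^ n) \<circ> P0 s \<circ> (Wadj s ^^ n)"

definition Mop :: "nat \<Rightarrow> ((nat \<Rightarrow> nat) \<Rightarrow> complex) \<Rightarrow> op" where
  "Mop s f v = (\<lambda>(n, x). f (zs_of s x) * v (n, x))"

text \<open>T_W(G) = \<Sum>_n P_n (M_{g_n} - M_{g_\<infinity>}) P_n + M_{g_\<infinity>}; the (norm convergent) series
is evaluated coordinatewise, which gives the same operator.\<close>
definition TW :: "nat \<Rightarrow> (nat \<Rightarrow> (nat \<Rightarrow> nat) \<Rightarrow> complex) \<Rightarrow> op" where
  "TW s g v = (\<lambda>p. (\<Sum>n. Pn s n (Mop s (g n) (Pn s n v) - Mop s (glim g) (Pn s n v)) p)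
                   + Mop s (glim g) v p)"

definition compact_op :: "nat \<Rightarrow> op \<Rightarrow> bool" where
  "compact_op s T \<longleftrightarrow>
     (\<forall>v. inH s v \<longrightarrow> inH s (T v)) \<and>
     (\<forall>u v (a::complex) (b::complex). inH s u \<longrightarrow> inH s v \<longrightarrow>
        T (\<lambda>p. a * u p + b * v p) = (\<lambda>p. a * T u p + b * T v p)) \<and>
     (\<forall>(vs :: nat \<Rightarrow> nat \<times> nat \<Rightarrow> complex) (B::real). (\<forall>k. inH s (vs k) \<and> l2norm (vs k) \<le> B) \<longrightarrow>
        (\<exists>(r :: nat \<Rightarrow> nat) w. strict_mono r \<and> inH s w \<and> (\<lambda>k. l2norm (T (vs (r k)) - w)) \<longlonglongrightarrow> 0))"

definition Uop :: "real \<Rightarrow> op" where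
  "Uop \<theta> v = (\<lambda>(n, x). cis (2 * pi * real n * \<theta>) * v (n, x))"

definition compact_inv :: "nat \<Rightarrow> op \<Rightarrow> bool" where
  "compact_inv s T \<longleftrightarrow> compact_op s T \<and>
     (\<forall>\<theta> v. inH s v \<longrightarrow> Uop \<theta> (T (Uop (- \<theta>) v)) = T v)"

end

theory Submission
  imports Defs "HOL-Library.Diagonal_Subsequence"
begin

text \<open>The Serre shift, the projections \<open>P\<^sub>n\<close> and the operators \<open>M\<^sub>f\<close> all preserve the levels
\<open>H\<^sub>m = \<ell>\<^sup>2({0..<s\<^sup>m})\<close>. On level \<open>m\<close>, \<open>P\<^sub>n\<close> is the martingale difference \<open>D\<^sub>m\<^sub>-\<^sub>n\<close> of the
filtration by the residues \<open>y mod s\<^sup>k\<close>, so \<open>T\<^sub>W(G)\<close> acts on \<open>H\<^sub>m\<close> as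
\<open>\<Sum>\<^sub>k D\<^sub>k M\<^bsub>g\<^sub>m\<^sub>-\<^sub>k - g\<^sub>\<infinity>\<^esub> D\<^sub>k + M\<^bsub>g\<^sub>\<infinity>\<^esub>\<close>. If all symbols depend only on the first \<open>K\<close> \<open>s\<close>-adic
digits and \<open>g\<^sub>n = g\<^sub>\<infinity>\<close> for \<open>n \<ge> N\<close>, they commute with \<open>D\<^sub>k\<close> for \<open>k > K\<close> and the semicommutator
vanishes on all levels \<open>m \<ge> N + K\<close>. Continuous symbols on the compact space \<open>\<int>\<^sub>s\<close> are uniform
limits of such symbols, so the level norms of the semicommutator tend to \<open>0\<close>. An operator
acting levelwise with level norms tending to \<open>0\<close> is compact, and being levelwise it commutes
with the gauge action.\<close>

section \<open>Averaging over s-adic residue classes\<close>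

definition res_class :: "nat \<Rightarrow> nat \<Rightarrow> nat \<Rightarrow> nat \<Rightarrow> nat set" where
  "res_class s m k y = {y'. y' < s^m \<and> y' mod s^k = y mod s^k}"

definition cond_exp :: "nat \<Rightarrow> nat \<Rightarrow> nat \<Rightarrow> (nat \<Rightarrow> complex) \<Rightarrow> nat \<Rightarrow> complex" where
  "cond_exp s m k u y = (if y < s^m then (\<Sum>y'\<in>res_class s m k y. u y') / of_nat (s^(m-k)) else 0)"

definition mart_diff :: "nat \<Rightarrow> nat \<Rightarrow> nat \<Rightarrow> (nat \<Rightarrow> complex) \<Rightarrow> nat \<Rightarrow> complex" where
  "mart_diff s m k u y = cond_exp s m k u y - (if k = 0 then 0 else cond_exp s m (k-1) u y)"

lemma finite_res_class [simp]: "finite (res_class s m k y)"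
  unfolding res_class_def by auto

lemma mod_eq_power_le: "j \<le> k \<Longrightarrow> a mod s^k = b mod (s::nat)^k \<Longrightarrow> a mod s^j = b mod s^j"
  by (metis le_imp_power_dvd mod_mod_cancel)

lemma res_class_eq_image:
  assumes "0 < s" "k \<le> m"
  shows "res_class s m k y = (\<lambda>j. y mod s^k + j * s^k) ` {..<s^(m-k)}"
proof
  have sm: "s^m = s^(m-k) * s^k" using assms by (simp add: power_add[symmetric])
  show "res_class s m k y \<subseteq> (\<lambda>j. y mod s^k + j * s^k) ` {..<s^(m-k)}"
  proof
    fix y' assume "y' \<in> res_class s m k y"
    hence y': "y' < s^m" "y' mod s^k = y mod s^k" by (auto simp: res_class_def)
    have "y' div s^k < s^(m-k)" using y'(1) sm assms
      by (simp add: div_less_iff_less_mult)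
    moreover have "y' = y mod s^k + (y' div s^k) * s^k" using y'(2)
      by (metis mod_div_mult_eq add.commute)
    ultimately show "y' \<in> (\<lambda>j. y mod s^k + j * s^k) ` {..<s^(m-k)}" by blast
  qed
  show "(\<lambda>j. y mod s^k + j * s^k) ` {..<s^(m-k)} \<subseteq> res_class s m k y"
  proof
    fix y' assume "y' \<in> (\<lambda>j. y mod s^k + j * s^k) ` {..<s^(m-k)}"
    then obtain j where j: "j < s^(m-k)" "y' = y mod s^k + j * s^k" by auto
    have "y mod s^k < s^k" using assms by simp
    hence "y' < (j+1) * s^k" using j by simp
    also have "\<dots> \<le> s^(m-k) * s^k" using j by (intro mult_right_mono) auto
    finally have "y' < s^m" using sm by simp
    moreover have "y' mod s^k = y mod s^k" using j by simp
    ultimately show "y' \<in> res_class s m k y" by (simp add: res_class_def)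
  qed
qed

lemma inj_on_add_mult_power: "0 < s \<Longrightarrow> inj_on (\<lambda>j. c + j * s^k) (A::nat set)"
  by (auto simp: inj_on_def)

lemma card_res_class: "0 < s \<Longrightarrow> k \<le> m \<Longrightarrow> card (res_class s m k y) = s^(m-k)"
  by (simp only: res_class_eq_image card_image[OF inj_on_add_mult_power] card_lessThan)

lemma sum_res_class:
  "0 < s \<Longrightarrow> k \<le> m \<Longrightarrow> (\<Sum>y'\<in>res_class s m k y. f y') = (\<Sum>j<s^(m-k). f (y mod s^k + j * s^k))"
  by (simp only: res_class_eq_image sum.reindex[OF inj_on_add_mult_power] o_def)

lemma res_class_eq: "j \<le> k \<Longrightarrow> y' \<in> res_class s m k y \<Longrightarrow> res_class s m j y' = res_class s m j y"
  using mod_eq_power_le[of j k y' s y] by (simp add: res_class_def)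

text \<open>Each point of the coarse class is counted once for every point of its fine class.\<close>
lemma sum_res_class_nested:
  assumes s: "0 < s" and jk: "j \<le> k" and km: "k \<le> m"
  shows "(\<Sum>y'\<in>res_class s m j y. \<Sum>y''\<in>res_class s m k y'. u y'')
       = of_nat (s^(m-k)) * (\<Sum>y''\<in>res_class s m j y. u y'')"
proof -
  let ?C = "res_class s m"
  have fibre: "{y'\<in>?C j y. y' \<in> ?C k y''} = (if y'' \<in> ?C j y then ?C k y'' else {})"
    if y'': "y'' < s^m" for y''
  proof (cases "y'' \<in> ?C j y")
    case True
    have "?C k y'' \<subseteq> ?C j y"
      using True by (auto simp: res_class_def dest: mod_eq_power_le[OF jk])
    thus ?thesis using True by auto
  next
    case False
    have "y' \<notin> ?C k y''" if "y' \<in> ?C j y" for y'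
      using False that y'' by (auto simp: res_class_def dest: mod_eq_power_le[OF jk])
    thus ?thesis using False by auto
  qed
  have "(\<Sum>y'\<in>?C j y. \<Sum>y''\<in>?C k y'. u y'') = (\<Sum>y'\<in>?C j y. \<Sum>y''\<in>{y''\<in>{..<s^m}. y' \<in> ?C k y''}. u y'')"
    by (intro sum.cong refl arg_cong[where f="\<lambda>A. sum u A"]) (auto simp: res_class_def)
  also have "\<dots> = (\<Sum>y''<s^m. \<Sum>y'\<in>{y'\<in>?C j y. y' \<in> ?C k y''}. u y'')"
    by (rule sum.swap_restrict) auto
  also have "\<dots> = (\<Sum>y''<s^m. if y'' \<in> ?C j y then of_nat (s^(m-k)) * u y'' else 0)"
    by (intro sum.cong refl) (simp add: fibre card_res_class[OF s km])
  also have "\<dots> = (\<Sum>y''\<in>{..<s^m} \<inter> ?C j y. of_nat (s^(m-k)) * u y'')"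
    by (rule sum.inter_restrict[symmetric]) simp
  also have "{..<s^m} \<inter> ?C j y = ?C j y" by (auto simp: res_class_def)
  finally show ?thesis by (simp add: sum_distrib_left)
qed

lemma cond_exp_outside [simp]: "\<not> y < s^m \<Longrightarrow> cond_exp s m k u y = 0"
  by (simp add: cond_exp_def)

lemma cond_exp_inside: "y < s^m \<Longrightarrow> cond_exp s m k u y = (\<Sum>y'\<in>res_class s m k y. u y') / of_nat (s^(m-k))"
  by (simp add: cond_exp_def)

lemma cond_exp_cong: "(\<And>y. y < s^m \<Longrightarrow> u y = w y) \<Longrightarrow> cond_exp s m k u = cond_exp s m k w"
  by (auto simp: cond_exp_def res_class_def intro!: ext sum.cong)

lemma cond_exp_lincomb:
  "cond_exp s m k (\<lambda>y. a * u y + b * w y) y = a * cond_exp s m k u y + b * cond_exp s m k w y"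
  by (simp add: cond_exp_def sum.distrib sum_distrib_left add_divide_distrib)

lemma cond_exp_diff: "cond_exp s m k (\<lambda>y. u y - w y) y = cond_exp s m k u y - cond_exp s m k w y"
  by (simp add: cond_exp_def sum_subtractf diff_divide_distrib)

lemma cond_exp_sum: "cond_exp s m k (\<lambda>y. \<Sum>l\<in>L. f l y) y = (\<Sum>l\<in>L. cond_exp s m k (f l) y)"
  by (simp add: cond_exp_def sum_divide_distrib sum.swap[of _ L])

lemma cond_exp_top: "0 < s \<Longrightarrow> cond_exp s m m u y = (if y < s^m then u y else 0)"
proof -
  assume s: "0 < s"
  have "y < s^m \<Longrightarrow> res_class s m m y = {y}" by (auto simp: res_class_def)
  thus ?thesis by (simp add: cond_exp_def)
qed

lemma cond_exp_cond_exp_le: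
  assumes s: "0 < s" and jk: "j \<le> k" and km: "k \<le> m"
  shows "cond_exp s m j (cond_exp s m k u) y = cond_exp s m j u y"
proof (cases "y < s^m")
  case True
  have "cond_exp s m j (cond_exp s m k u) y
      = (\<Sum>y'\<in>res_class s m j y. \<Sum>y''\<in>res_class s m k y'. u y'') / of_nat (s^(m-k)) / of_nat (s^(m-j))"
    using True by (simp add: cond_exp_def res_class_def sum_divide_distrib)
  also have "\<dots> = cond_exp s m j u y"
    using True s by (simp add: sum_res_class_nested[OF s jk km] cond_exp_inside)
  finally show ?thesis .
qed simp

lemma cond_exp_cond_exp_ge:
  assumes s: "0 < s" and kj: "k \<le> j" and jm: "j \<le> m"
  shows "cond_exp s m j (cond_exp s m k u) y = cond_exp s m k u y"
proof (cases "y < s^m")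
  case True
  have "cond_exp s m k u y' = cond_exp s m k u y" if "y' \<in> res_class s m j y" for y'
    using res_class_eq[OF kj that] that True by (simp add: cond_exp_def res_class_def)
  hence "cond_exp s m j (cond_exp s m k u) y = (\<Sum>y'\<in>res_class s m j y. cond_exp s m k u y) / of_nat (s^(m-j))"
    using True by (simp add: cond_exp_inside)
  also have "\<dots> = cond_exp s m k u y" using card_res_class[OF s jm] s by simp
  finally show ?thesis .
qed simp

lemma cond_exp_cond_exp:
  "0 < s \<Longrightarrow> j \<le> m \<Longrightarrow> k \<le> m \<Longrightarrow> cond_exp s m j (cond_exp s m k u) y = cond_exp s m (min j k) u y"
  by (cases "j \<le> k") (simp_all add: cond_exp_cond_exp_le cond_exp_cond_exp_ge)

lemma mart_diff_outside [simp]: "\<not> y < s^m \<Longrightarrow> mart_diff s m k u y = 0"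
  by (simp add: mart_diff_def)

lemma mart_diff_zero [simp]: "mart_diff s m k (\<lambda>y. 0) y = 0"
  by (simp add: mart_diff_def cond_exp_def)

lemma mart_diff_cong: "(\<And>y. y < s^m \<Longrightarrow> u y = w y) \<Longrightarrow> mart_diff s m k u = mart_diff s m k w"
  unfolding mart_diff_def[abs_def] by (metis cond_exp_cong)

lemma mart_diff_lincomb:
  "mart_diff s m k (\<lambda>y. a * u y + b * w y) y = a * mart_diff s m k u y + b * mart_diff s m k w y"
  by (simp add: mart_diff_def cond_exp_lincomb algebra_simps)

lemma mart_diff_diff: "mart_diff s m k (\<lambda>y. u y - w y) y = mart_diff s m k u y - mart_diff s m k w y"
  by (simp add: mart_diff_def cond_exp_diff algebra_simps)

lemma mart_diff_add: "mart_diff s m k (\<lambda>y. u y + w y) y = mart_diff s m k u y + mart_diff s m k w y"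
  using mart_diff_lincomb[of s m k 1 u 1 w y] by simp

lemma mart_diff_sum: "mart_diff s m k (\<lambda>y. \<Sum>l\<in>L. f l y) y = (\<Sum>l\<in>L. mart_diff s m k (f l) y)"
  by (simp add: mart_diff_def cond_exp_sum sum_subtractf)

lemma mart_diff_mart_diff:
  assumes s: "0 < s" and km: "k \<le> m" and lm: "l \<le> m"
  shows "mart_diff s m k (mart_diff s m l u) y = (if k = l then mart_diff s m k u y else 0)"
proof -
  have E: "cond_exp s m a (mart_diff s m l u) y
      = cond_exp s m (min a l) u y - (if l = 0 then 0 else cond_exp s m (min a (l-1)) u y)" if "a \<le> m" for a
    using that lm unfolding mart_diff_def[of s m l]
    by (cases "l = 0") (simp_all add: cond_exp_diff cond_exp_cond_exp[OF s])
  consider (lt) "k < l" | (eq) "k = l" | (gt) "l < k" by linarith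
  thus ?thesis
  proof cases
    case lt
    hence "min k l = k" "min k (l-1) = k" "min (k-1) l = k-1" "min (k-1) (l-1) = k-1" "l \<noteq> 0" by auto
    thus ?thesis using lt km by (simp add: mart_diff_def[of s m k] E)
  next
    case eq
    hence "min k l = k" "min k (l-1) = k-1" "min (k-1) l = k-1" "min (k-1) (l-1) = k-1" by auto
    thus ?thesis using eq km by (simp add: mart_diff_def E)
  next
    case gt
    hence "min k l = l" "min k (l-1) = l-1" "min (k-1) l = l" "min (k-1) (l-1) = l-1" "k \<noteq> 0" by auto
    thus ?thesis using gt km by (simp add: mart_diff_def[of s m k] E)
  qed
qed

lemma sum_mart_diff: "(\<Sum>k\<le>n. mart_diff s m k u y) = cond_exp s m n u y"
  by (induction n) (simp_all add: mart_diff_def)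

lemma sum_mart_diff_top: "0 < s \<Longrightarrow> y < s^m \<Longrightarrow> (\<Sum>k\<le>m. mart_diff s m k u y) = u y"
  by (simp add: sum_mart_diff cond_exp_top)

section \<open>Norms on a level\<close>

definition level_inner :: "nat \<Rightarrow> nat \<Rightarrow> (nat \<Rightarrow> complex) \<Rightarrow> (nat \<Rightarrow> complex) \<Rightarrow> complex" where
  "level_inner s m a b = (\<Sum>y<s^m. cnj (a y) * b y)"

definition level_norm :: "nat \<Rightarrow> nat \<Rightarrow> (nat \<Rightarrow> complex) \<Rightarrow> real" where
  "level_norm s m u = L2_set (\<lambda>y. cmod (u y)) {..<s^m}"

lemma level_norm_nonneg[simp]: "0 \<le> level_norm s m u" by (simp add: level_norm_def)

lemma level_norm_sq: "(level_norm s m u)^2 = (\<Sum>y<s^m. (cmod (u y))^2)"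
  by (simp add: level_norm_def L2_set_def sum_nonneg)

lemma level_inner_self: "level_inner s m u u = of_real ((level_norm s m u)^2)"
  unfolding level_inner_def level_norm_sq of_real_sum
  by (intro sum.cong refl) (metis complex_norm_square mult.commute)

lemma level_inner_Cauchy_Schwarz: "cmod (level_inner s m a b) \<le> level_norm s m a * level_norm s m b"
proof -
  have "cmod (level_inner s m a b) \<le> (\<Sum>y<s^m. \<bar>cmod (a y)\<bar> * \<bar>cmod (b y)\<bar>)"
    unfolding level_inner_def by (rule order_trans[OF norm_sum]) (simp add: norm_mult)
  also have "\<dots> \<le> level_norm s m a * level_norm s m b" unfolding level_norm_def by (rule L2_set_mult_ineq)
  finally show ?thesis .
qed

lemma level_inner_cong_right: "(\<And>y. y < s^m \<Longrightarrow> b y = b' y) \<Longrightarrow> level_inner s m a b = level_inner s m a b'"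
  by (simp add: level_inner_def)

lemma level_inner_sum_right: "level_inner s m a (\<lambda>y. \<Sum>k\<in>K. f k y) = (\<Sum>k\<in>K. level_inner s m a (f k))"
  unfolding level_inner_def by (simp add: sum_distrib_left) (rule sum.swap)

lemma level_inner_cond_exp:
  "level_inner s m (cond_exp s m k a) b = level_inner s m a (cond_exp s m k b)"
proof -
  let ?c = "of_nat (s^(m-k)) :: complex"
  let ?R = "\<lambda>y y'. y' mod s^k = y mod s^k"
  have "level_inner s m (cond_exp s m k a) b = (\<Sum>y<s^m. (\<Sum>y'\<in>{y'\<in>{..<s^m}. ?R y y'}. cnj (a y') * b y) / ?c)"
    unfolding level_inner_def
  proof (intro sum.cong refl)
    fix y assume "y \<in> {..<s^m}"
    hence "cond_exp s m k a y = (\<Sum>y'\<in>{y'\<in>{..<s^m}. ?R y y'}. a y') / ?c"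
      by (simp add: cond_exp_inside res_class_def)
    thus "cnj (cond_exp s m k a y) * b y = (\<Sum>y'\<in>{y'\<in>{..<s^m}. ?R y y'}. cnj (a y') * b y) / ?c"
      by (simp add: sum_distrib_right)
  qed
  also have "\<dots> = (\<Sum>y<s^m. \<Sum>y'\<in>{y'\<in>{..<s^m}. ?R y y'}. cnj (a y') * b y) / ?c"
    by (simp add: sum_divide_distrib)
  also have "(\<Sum>y<s^m. \<Sum>y'\<in>{y'\<in>{..<s^m}. ?R y y'}. cnj (a y') * b y)
      = (\<Sum>y'<s^m. \<Sum>y\<in>{y\<in>{..<s^m}. ?R y y'}. cnj (a y') * b y)"
    by (rule sum.swap_restrict) auto
  also have "\<dots> / ?c = (\<Sum>y'<s^m. (\<Sum>y\<in>{y\<in>{..<s^m}. ?R y y'}. cnj (a y') * b y) / ?c)"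
    by (simp add: sum_divide_distrib)
  also have "\<dots> = level_inner s m a (cond_exp s m k b)"
    unfolding level_inner_def
  proof (intro sum.cong refl)
    fix y' assume "y' \<in> {..<s^m}"
    hence "cond_exp s m k b y' = (\<Sum>y\<in>{y\<in>{..<s^m}. ?R y y'}. b y) / ?c"
    proof -
      assume "y' \<in> {..<s^m}"
      hence "cond_exp s m k b y' = (\<Sum>y\<in>res_class s m k y'. b y) / ?c" by (simp add: cond_exp_inside)
      moreover have "res_class s m k y' = {y\<in>{..<s^m}. ?R y y'}" by (auto simp: res_class_def)
      ultimately show ?thesis by simp
    qed
    thus "(\<Sum>y\<in>{y\<in>{..<s^m}. ?R y y'}. cnj (a y') * b y) / ?c = cnj (a y') * cond_exp s m k b y'"
      by (simp add: sum_distrib_left)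
  qed
  finally show ?thesis .
qed

lemma level_inner_mart_diff:
  "level_inner s m (mart_diff s m k a) b = level_inner s m a (mart_diff s m k b)"
proof -
  have "level_inner s m (mart_diff s m k a) b = level_inner s m (cond_exp s m k a) b - (if k = 0 then 0 else level_inner s m (cond_exp s m (k-1) a) b)"
    by (cases "k = 0") (simp_all add: level_inner_def mart_diff_def algebra_simps sum_subtractf)
  also have "\<dots> = level_inner s m a (cond_exp s m k b) - (if k = 0 then 0 else level_inner s m a (cond_exp s m (k-1) b))"
    by (simp add: level_inner_cond_exp)
  also have "\<dots> = level_inner s m a (mart_diff s m k b)"
    by (cases "k = 0") (simp_all add: mart_diff_def level_inner_def algebra_simps sum_subtractf)
  finally show ?thesis .
qed

lemma sum_level_norm_mart_diff:
  assumes s: "0 < s"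
  shows "(\<Sum>k\<le>m. (level_norm s m (mart_diff s m k w))^2) = (level_norm s m w)^2"
proof -
  have "of_real (\<Sum>k\<le>m. (level_norm s m (mart_diff s m k w))^2) = (\<Sum>k\<le>m. level_inner s m (mart_diff s m k w) (mart_diff s m k w))"
    by (simp add: level_inner_self)
  also have "\<dots> = (\<Sum>k\<le>m. level_inner s m w (mart_diff s m k w))"
  proof (intro sum.cong refl)
    fix k assume "k \<in> {..m}"
    hence km: "k \<le> m" by simp
    have "level_inner s m (mart_diff s m k w) (mart_diff s m k w) = level_inner s m w (mart_diff s m k (mart_diff s m k w))"
      by (rule level_inner_mart_diff)
    also have "mart_diff s m k (mart_diff s m k w) = mart_diff s m k w"
      using mart_diff_mart_diff[OF s km km] by (simp add: fun_eq_iff)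
    finally show "level_inner s m (mart_diff s m k w) (mart_diff s m k w) = level_inner s m w (mart_diff s m k w)" .
  qed
  also have "\<dots> = level_inner s m w (\<lambda>y. \<Sum>k\<le>m. mart_diff s m k w y)"
    by (simp add: level_inner_sum_right)
  also have "\<dots> = level_inner s m w w"
    by (rule level_inner_cong_right) (simp add: sum_mart_diff_top[OF s])
  also have "\<dots> = of_real ((level_norm s m w)^2)" by (simp add: level_inner_self)
  finally show ?thesis by (simp only: of_real_eq_iff)
qed

lemma level_norm_cong: "(\<And>y. y < s^m \<Longrightarrow> u y = w y) \<Longrightarrow> level_norm s m u = level_norm s m w"
  unfolding level_norm_def by (intro L2_set_cong) auto

lemma level_norm_mult_le:
  assumes "\<And>y. y < s^m \<Longrightarrow> cmod (F y) \<le> b" and "0 \<le> b"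
  shows "level_norm s m (\<lambda>y. F y * u y) \<le> b * level_norm s m u"
proof -
  have "level_norm s m (\<lambda>y. F y * u y) \<le> L2_set (\<lambda>y. b * cmod (u y)) {..<s^m}"
    unfolding level_norm_def
    by (rule L2_set_mono) (auto simp: norm_mult intro!: mult_right_mono assms)
  also have "\<dots> = b * level_norm s m u" unfolding level_norm_def by (rule L2_set_right_distrib[symmetric]) fact
  finally show ?thesis .
qed

lemma level_norm_add_le: "level_norm s m (\<lambda>y. a y + b y) \<le> level_norm s m a + level_norm s m b"
proof -
  have "level_norm s m (\<lambda>y. a y + b y) \<le> L2_set (\<lambda>y. cmod (a y) + cmod (b y)) {..<s^m}"
    unfolding level_norm_def by (rule L2_set_mono) (auto intro: norm_triangle_ineq)
  also have "\<dots> \<le> level_norm s m a + level_norm s m b" unfolding level_norm_def by (rule L2_set_triangle_ineq)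
  finally show ?thesis .
qed

lemma level_norm_diff_le: "level_norm s m (\<lambda>y. a y - b y) \<le> level_norm s m a + level_norm s m b"
proof -
  have "level_norm s m (\<lambda>y. a y - b y) \<le> L2_set (\<lambda>y. cmod (a y) + cmod (b y)) {..<s^m}"
    unfolding level_norm_def by (rule L2_set_mono) (auto intro: norm_triangle_ineq4)
  also have "\<dots> \<le> level_norm s m a + level_norm s m b" unfolding level_norm_def by (rule L2_set_triangle_ineq)
  finally show ?thesis .
qed

lemma le_of_sq_le_mult:
  fixes x b :: real
  assumes "0 \<le> b" "x^2 \<le> x * b"
  shows "x \<le> b"
proof (cases "0 < x")
  case True with assms(2) show ?thesis by (simp add: power2_eq_square mult_le_cancel_left_pos)
next
  case False with assms(1) show ?thesis by linarith
qed

text \<open>The \<open>D\<^sub>k\<close> are self-adjoint orthogonal projections summing to the identity, so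
\<open>\<parallel>w\<parallel>\<^sup>2 = \<Sum>\<^sub>k \<langle>D\<^sub>k w, Y\<^sub>k D\<^sub>k u\<rangle> \<le> c \<Sum>\<^sub>k \<parallel>D\<^sub>k w\<parallel> \<parallel>D\<^sub>k u\<parallel> \<le> c \<parallel>w\<parallel> \<parallel>u\<parallel>\<close>.\<close>
lemma level_norm_block_diagonal_le:
  assumes s: "0 < s" and c: "0 \<le> c"
    and Y: "\<And>k u. k \<le> m \<Longrightarrow> level_norm s m (Y k u) \<le> c * level_norm s m u"
  shows "level_norm s m (\<lambda>y. \<Sum>k\<le>m. mart_diff s m k (Y k (mart_diff s m k u)) y) \<le> c * level_norm s m u"
proof -
  define w where "w = (\<lambda>y. \<Sum>k\<le>m. mart_diff s m k (Y k (mart_diff s m k u)) y)"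
  have "level_inner s m w w = (\<Sum>k\<le>m. level_inner s m w (mart_diff s m k (Y k (mart_diff s m k u))))"
    by (subst (2) w_def) (rule level_inner_sum_right)
  also have "\<dots> = (\<Sum>k\<le>m. level_inner s m (mart_diff s m k w) (Y k (mart_diff s m k u)))"
    by (intro sum.cong refl) (simp add: level_inner_mart_diff)
  finally have eq: "level_inner s m w w = (\<Sum>k\<le>m. level_inner s m (mart_diff s m k w) (Y k (mart_diff s m k u)))" .
  have "(level_norm s m w)^2 = cmod (level_inner s m w w)"
    unfolding level_inner_self norm_of_real by simp
  also have "\<dots> \<le> (\<Sum>k\<le>m. cmod (level_inner s m (mart_diff s m k w) (Y k (mart_diff s m k u))))"
    unfolding eq by (rule norm_sum)
  also have "\<dots> \<le> (\<Sum>k\<le>m. level_norm s m (mart_diff s m k w) * (c * level_norm s m (mart_diff s m k u)))"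
  proof (intro sum_mono)
    fix k assume "k \<in> {..m}"
    hence km: "k \<le> m" by simp
    show "cmod (level_inner s m (mart_diff s m k w) (Y k (mart_diff s m k u))) \<le> level_norm s m (mart_diff s m k w) * (c * level_norm s m (mart_diff s m k u))"
      by (rule order_trans[OF level_inner_Cauchy_Schwarz]) (intro mult_left_mono Y km, simp)
  qed
  also have "\<dots> = c * (\<Sum>k\<le>m. \<bar>level_norm s m (mart_diff s m k w)\<bar> * \<bar>level_norm s m (mart_diff s m k u)\<bar>)"
    by (simp add: sum_distrib_left algebra_simps)
  also have "\<dots> \<le> c * (L2_set (\<lambda>k. level_norm s m (mart_diff s m k w)) {..m} * L2_set (\<lambda>k. level_norm s m (mart_diff s m k u)) {..m})"
    by (intro mult_left_mono c L2_set_mult_ineq)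
  also have "L2_set (\<lambda>k. level_norm s m (mart_diff s m k w)) {..m} = level_norm s m w"
    unfolding L2_set_def sum_level_norm_mart_diff[OF s] by simp
  also have "L2_set (\<lambda>k. level_norm s m (mart_diff s m k u)) {..m} = level_norm s m u"
    unfolding L2_set_def sum_level_norm_mart_diff[OF s] by simp
  finally have "(level_norm s m w)^2 \<le> level_norm s m w * (c * level_norm s m u)"
    by (simp add: algebra_simps)
  thus ?thesis unfolding w_def by (rule le_of_sq_le_mult[rotated]) (simp add: c)
qed

section \<open>The operator \<open>T\<^sub>W\<close> on a level\<close>

text \<open>\<open>T\<^sub>W\<close> on level \<open>m\<close> (see \<open>TW_on_level\<close>): \<open>G n y\<close> and \<open>Gi y\<close> stand for \<open>g\<^sub>n\<close> and \<open>g\<^sub>\<infinity>\<close> at the digits of \<open>y\<close>.\<close>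
definition level_TW :: "nat \<Rightarrow> nat \<Rightarrow> (nat \<Rightarrow> nat \<Rightarrow> complex) \<Rightarrow> (nat \<Rightarrow> complex) \<Rightarrow> (nat \<Rightarrow> complex) \<Rightarrow> nat \<Rightarrow> complex" where
  "level_TW s m G Gi u = (\<lambda>y. (\<Sum>k\<le>m. mart_diff s m k (\<lambda>y'. (G (m-k) y' - Gi y') * mart_diff s m k u y') y) + Gi y * u y)"

lemma level_TW_norm_le:
  assumes s: "0 < s" and a: "0 \<le> a" and b: "0 \<le> b"
    and G: "\<And>n y. y < s^m \<Longrightarrow> cmod (G n y - Gi y) \<le> a"
    and Gi: "\<And>y. y < s^m \<Longrightarrow> cmod (Gi y) \<le> b"
  shows "level_norm s m (level_TW s m G Gi u) \<le> (a + b) * level_norm s m u"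
proof -
  have "level_norm s m (level_TW s m G Gi u) \<le> level_norm s m (\<lambda>y. \<Sum>k\<le>m. mart_diff s m k (\<lambda>y'. (G (m-k) y' - Gi y') * mart_diff s m k u y') y)
        + level_norm s m (\<lambda>y. Gi y * u y)"
    unfolding level_TW_def by (rule level_norm_add_le)
  also have "\<dots> \<le> a * level_norm s m u + b * level_norm s m u"
  proof (rule add_mono)
    show "level_norm s m (\<lambda>y. \<Sum>k\<le>m. mart_diff s m k (\<lambda>y'. (G (m-k) y' - Gi y') * mart_diff s m k u y') y) \<le> a * level_norm s m u"
      using level_norm_block_diagonal_le[OF s a, of m "\<lambda>k v y'. (G (m-k) y' - Gi y') * v y'" u]
      by (simp add: level_norm_mult_le G a)
    show "level_norm s m (\<lambda>y. Gi y * u y) \<le> b * level_norm s m u"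
      by (rule level_norm_mult_le) (use Gi b in auto)
  qed
  finally show ?thesis by (simp add: algebra_simps)
qed

lemma level_TW_lincomb: "level_TW s m G Gi (\<lambda>y. a * u y + b * w y) y = a * level_TW s m G Gi u y + b * level_TW s m G Gi w y"
proof -
  have "mart_diff s m k (\<lambda>y'. (G (m-k) y' - Gi y') * mart_diff s m k (\<lambda>y. a * u y + b * w y) y') y
      = a * mart_diff s m k (\<lambda>y'. (G (m-k) y' - Gi y') * mart_diff s m k u y') y + b * mart_diff s m k (\<lambda>y'. (G (m-k) y' - Gi y') * mart_diff s m k w y') y" for k
  proof -
    have "(\<lambda>y'. (G (m-k) y' - Gi y') * mart_diff s m k (\<lambda>y. a * u y + b * w y) y')
       = (\<lambda>y'. a * ((G (m-k) y' - Gi y') * mart_diff s m k u y') + b * ((G (m-k) y' - Gi y') * mart_diff s m k w y'))"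
      by (simp add: mart_diff_lincomb algebra_simps)
    thus ?thesis by (simp add: mart_diff_lincomb)
  qed
  thus ?thesis by (simp add: level_TW_def sum.distrib sum_distrib_left algebra_simps)
qed

lemma level_TW_diff: "level_TW s m G Gi u y - level_TW s m G Gi w y = level_TW s m G Gi (\<lambda>y. u y - w y) y"
  using level_TW_lincomb[of s m G Gi 1 u "-1" w y] by simp

lemma level_TW_diff_symbol: "level_TW s m G Gi u y - level_TW s m H Hi u y = level_TW s m (\<lambda>n y. G n y - H n y) (\<lambda>y. Gi y - Hi y) u y"
proof -
  have "mart_diff s m k (\<lambda>y'. (G (m-k) y' - Gi y') * mart_diff s m k u y') y - mart_diff s m k (\<lambda>y'. (H (m-k) y' - Hi y') * mart_diff s m k u y') y
      = mart_diff s m k (\<lambda>y'. ((G (m-k) y' - H (m-k) y') - (Gi y' - Hi y')) * mart_diff s m k u y') y" for k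
    by (simp add: mart_diff_diff[symmetric] algebra_simps)
  thus ?thesis by (simp add: level_TW_def sum_subtractf[symmetric] algebra_simps)
qed

lemma level_TW_norm_le_symbol_bound:
  assumes s: "0 < s" and G: "\<And>n y. cmod (G n y) \<le> a" and Gi: "\<And>y. cmod (Gi y) \<le> a"
  shows "level_norm s m (level_TW s m G Gi u) \<le> 3 * a * level_norm s m u"
proof -
  have a0: "0 \<le> a" using Gi[of 0] by (rule order_trans[rotated]) simp
  have "level_norm s m (level_TW s m G Gi u) \<le> (2 * a + a) * level_norm s m u"
  proof (rule level_TW_norm_le[OF s])
    show "cmod (G n y - Gi y) \<le> 2 * a" for n y
      using norm_triangle_ineq4[of "G n y" "Gi y"] G[of n y] Gi[of y] by linarith
  qed (use a0 Gi in auto)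
  thus ?thesis by simp
qed

lemma level_TW_cong:
  assumes "\<And>y'. y' < s^m \<Longrightarrow> u y' = w y'" and "y < s^m"
  shows "level_TW s m G Gi u y = level_TW s m G Gi w y"
proof -
  have "mart_diff s m k u = mart_diff s m k w" for k by (rule mart_diff_cong) (rule assms(1))
  thus ?thesis using assms by (simp add: level_TW_def)
qed

abbreviation sqrt_s :: "nat \<Rightarrow> complex" where
  "sqrt_s s \<equiv> complex_of_real (sqrt (real s))"

lemma Wop_power_apply:
  assumes s: "0 < s"
  shows "y < s^m \<Longrightarrow> (Wop s ^^ n) v (m, y) = (if n \<le> m then v (m-n, y mod s^(m-n)) / (sqrt_s s)^n else 0)"
proof (induction n arbitrary: m y)
  case 0
  then show ?case by simp
next
  case (Suc n)
  show ?case
  proof (cases m)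
    case 0 thus ?thesis by (simp add: Wop_def)
  next
    case (Suc m')
    have lt: "y mod s^m' < s^m'" using s by simp
    have W: "(Wop s ^^ Suc n) v (m, y) = (Wop s ^^ n) v (m', y mod s^m') / sqrt_s s"
      using Suc Suc.prems by (simp add: Wop_def)
    show ?thesis
    proof (cases "n \<le> m'")
      case True
      have "(Wop s ^^ n) v (m', y mod s^m') = v (m'-n, y mod s^m' mod s^(m'-n)) / (sqrt_s s)^n"
        using Suc.IH[OF lt] True lt by simp
      also have "y mod s^m' mod s^(m'-n) = y mod s^(m'-n)"
        by (simp add: mod_mod_cancel le_imp_power_dvd)
      finally show ?thesis using W True Suc Suc.prems by (simp add: field_simps)
    next
      case F2: False
      hence "(Wop s ^^ n) v (m', y mod s^m') = 0" using Suc.IH[OF lt] by simp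
      thus ?thesis using W F2 Suc by simp
    qed
  qed
qed

lemma Wadj_power_apply:
  assumes s: "0 < s" and x: "x < s^k"
  shows "(Wadj s ^^ n) v (k, x) = (\<Sum>j<(s^n). v (k+n, x + j * s^k)) / (sqrt_s s)^n"
proof (induction n arbitrary: v)
  case 0
  show ?case by simp
next
  case (Suc n)
  have inb: "x + j * s^k < s^(k+n)" if "j < s^n" for j
  proof -
    have "x + j * s^k < s^k + j * s^k" using x by simp
    also have "\<dots> = (j+1) * s^k" by simp
    also have "\<dots> \<le> s^n * s^k" using that by (intro mult_right_mono) auto
    finally show ?thesis by (simp add: power_add mult.commute)
  qed
  have "(Wadj s ^^ Suc n) v (k, x) = (Wadj s ^^ n) (Wadj s v) (k, x)" by (simp only: funpow_Suc_right o_def)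
  also have "\<dots> = (\<Sum>j<(s^n). Wadj s v (k+n, x + j * s^k)) / (sqrt_s s)^n" by (rule Suc.IH)
  also have "(\<Sum>j<(s^n). Wadj s v (k+n, x + j * s^k)) = (\<Sum>j<(s^n). (\<Sum>i<s. v (k + Suc n, x + (j + i * s^n) * s^k)) / sqrt_s s)"
  proof (intro sum.cong refl)
    fix j assume "j \<in> {..<s^n}"
    hence "x + j * s^k < s^(k+n)" using inb by simp
    thus "Wadj s v (k+n, x + j * s^k) = (\<Sum>i<s. v (k + Suc n, x + (j + i * s^n) * s^k)) / sqrt_s s"
      by (simp add: Wadj_def algebra_simps power_add)
  qed
  also have "\<dots> = (\<Sum>j<(s^n). \<Sum>i<s. v (k + Suc n, x + (j + i * s^n) * s^k)) / sqrt_s s"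
    by (simp add: sum_divide_distrib)
  also have "(\<Sum>j<(s^n). \<Sum>i<s. v (k + Suc n, x + (j + i * s^n) * s^k)) = (\<Sum>t<(s^(Suc n)). v (k + Suc n, x + t * s^k))"
  proof -
    have "(\<Sum>t<(s^(Suc n)). v (k + Suc n, x + t * s^k)) = (\<Sum>i<s. \<Sum>j<(s^n). v (k + Suc n, x + (j + i * s^n) * s^k))"
      using sum_mult_product[where A=s and B="s^n" and h="\<lambda>t. v (k + Suc n, x + t * s^k)"] by simp
    also have "\<dots> = (\<Sum>j<(s^n). \<Sum>i<s. v (k + Suc n, x + (j + i * s^n) * s^k))"
      by (rule sum.swap)
    finally show ?thesis by simp
  qed
  finally show ?case by (simp add: field_simps)
qed

lemma sqrt_s_power_sq: "(sqrt_s s)^n * (sqrt_s s)^n = of_nat (s^n)"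
proof -
  have "(sqrt_s s)^n * (sqrt_s s)^n = ((sqrt_s s) * (sqrt_s s))^n" by (simp add: power_mult_distrib)
  also have "sqrt_s s * sqrt_s s = of_nat s" by (simp flip: of_real_mult)
  finally show ?thesis by simp
qed

lemma Wop_power_Wadj_power:
  assumes s: "0 < s" and y: "y < s^m"
  shows "(Wop s ^^ j) ((Wadj s ^^ j) w) (m, y) = (if j \<le> m then cond_exp s m (m-j) (\<lambda>y. w (m, y)) y else 0)"
proof (cases "j \<le> m")
  case False thus ?thesis by (auto simp: Wop_power_apply[OF s y])
next
  case True
  hence jm: "j \<le> m" by auto
  have "(Wop s ^^ j) ((Wadj s ^^ j) w) (m, y) = (\<Sum>i<(s^j). w (m, y mod s^(m-j) + i * s^(m-j))) / (sqrt_s s)^j / (sqrt_s s)^j"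
    using True s y by (simp add: Wop_power_apply Wadj_power_apply)
  also have "\<dots> = (\<Sum>i<(s^j). w (m, y mod s^(m-j) + i * s^(m-j))) / ((sqrt_s s)^j * (sqrt_s s)^j)"
    by (simp add: divide_divide_eq_left)
  also have "\<dots> = (\<Sum>i<(s^j). w (m, y mod s^(m-j) + i * s^(m-j))) / of_nat (s^j)"
    by (simp only: sqrt_s_power_sq)
  also have "\<dots> = cond_exp s m (m-j) (\<lambda>y. w (m, y)) y"
    using jm y s by (simp add: cond_exp_inside sum_res_class)
  finally show ?thesis using jm by simp
qed

lemma Pn_level:
  assumes s: "0 < s" and y: "y < s^m"
  shows "Pn s n w (m, y) = (if n \<le> m then mart_diff s m (m-n) (\<lambda>y. w (m, y)) y else 0)"
proof -
  have lin: "(Wop s ^^ n) (a - b) p = (Wop s ^^ n) a p - (Wop s ^^ n) b p"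
    if "snd p < s^(fst p)" for a b p
    using that by (cases p) (simp add: Wop_power_apply[OF s] diff_divide_distrib)
  have e1: "(Wop s ^^ n) (Wop s x) = (Wop s ^^ Suc n) x" for x
    by (simp add: funpow_Suc_right del: funpow.simps)
  have e2: "Wadj s ((Wadj s ^^ n) w) = (Wadj s ^^ Suc n) w" by simp
  have "Pn s n w (m, y) = (Wop s ^^ n) ((Wadj s ^^ n) w - Wop s (Wadj s ((Wadj s ^^ n) w))) (m,y)"
    by (simp add: Pn_def P0_def)
  also have "\<dots> = (Wop s ^^ n) ((Wadj s ^^ n) w) (m,y) - (Wop s ^^ Suc n) ((Wadj s ^^ Suc n) w) (m,y)"
    using y by (simp add: lin e1 e2 del: funpow.simps)
  also have "\<dots> = (if n \<le> m then mart_diff s m (m-n) (\<lambda>y. w (m, y)) y else 0)"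
    by (simp add: Wop_power_Wadj_power[OF s y] mart_diff_def del: funpow.simps)
  finally show ?thesis .
qed

lemma Pn_outside:
  assumes "s^m \<le> y"
  shows "Pn s n w (m, y) = (if n = 0 then w (m, y) else 0)"
proof (cases n)
  case 0 thus ?thesis using assms by (simp add: Pn_def P0_def Wop_def)
next
  case (Suc n') thus ?thesis using assms by (simp add: Pn_def Wop_def del: funpow.simps) (simp add: Wop_def)
qed

lemma Mop_apply: "Mop s f w (m, y) = f (zs_of s y) * w (m, y)"
  by (simp add: Mop_def)

lemma TW_on_level:
  assumes s: "0 < s" and y: "y < s^m"
  shows "TW s g v (m, y) = level_TW s m (\<lambda>n y. g n (zs_of s y)) (\<lambda>y. glim g (zs_of s y)) (\<lambda>y. v (m, y)) y"
proof -
  let ?G = "\<lambda>n y. g n (zs_of s y)" and ?Gi = "\<lambda>y. glim g (zs_of s y)"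
  let ?X = "\<lambda>n. Mop s (g n) (Pn s n v) - Mop s (glim g) (Pn s n v)"
  let ?T = "\<lambda>k. mart_diff s m k (\<lambda>y'. (?G (m-k) y' - ?Gi y') * mart_diff s m k (\<lambda>y. v (m, y)) y') y"
  have trm: "Pn s n (?X n) (m, y) = (if n \<le> m then ?T (m - n) else 0)" for n
  proof (cases "n \<le> m")
    case False thus ?thesis by (simp add: Pn_level[OF s y])
  next
    case True
    have "Pn s n (?X n) (m, y) = mart_diff s m (m-n) (\<lambda>y'. ?X n (m, y')) y"
      using True by (simp add: Pn_level[OF s y])
    also have "mart_diff s m (m-n) (\<lambda>y'. ?X n (m, y')) = mart_diff s m (m-n) (\<lambda>y'. (?G n y' - ?Gi y') * mart_diff s m (m-n) (\<lambda>y. v (m, y)) y')"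
    proof (rule mart_diff_cong)
      fix y' assume y': "y' < s^m"
      show "?X n (m, y') = (?G n y' - ?Gi y') * mart_diff s m (m-n) (\<lambda>y. v (m, y)) y'"
        using True by (simp add: Mop_apply Pn_level[OF s y'] algebra_simps)
    qed
    finally show ?thesis using True by (simp add: fun_diff_def)
  qed
  have "(\<Sum>n. Pn s n (?X n) (m, y)) = (\<Sum>n\<le>m. Pn s n (?X n) (m, y))"
    by (rule suminf_finite) (auto simp: trm)
  also have "\<dots> = (\<Sum>n\<le>m. ?T (m - n))"
    by (intro sum.cong refl) (simp add: trm)
  also have "\<dots> = (\<Sum>k\<le>m. ?T k)"
  proof -
    have "(\<Sum>n<Suc m. ?T (Suc m - Suc n)) = (\<Sum>k<Suc m. ?T k)" by (rule sum.nat_diff_reindex)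
    thus ?thesis by (simp add: lessThan_Suc_atMost)
  qed
  finally have "(\<Sum>n. Pn s n (?X n) (m, y)) = (\<Sum>k\<le>m. ?T k)" .
  thus ?thesis by (simp add: TW_def level_TW_def Mop_apply)
qed

lemma TW_outside:
  assumes "s^m \<le> y" and "v (m, y) = 0"
  shows "TW s g v (m, y) = 0"
proof -
  let ?X = "\<lambda>n. Mop s (g n) (Pn s n v) - Mop s (glim g) (Pn s n v)"
  have "(\<Sum>n. Pn s n (?X n) (m, y)) = 0"
  proof -
    have "(\<Sum>n. Pn s n (?X n) (m, y)) = (\<Sum>n\<in>{0}. Pn s n (?X n) (m, y))"
      by (rule suminf_finite) (use assms in \<open>auto simp: Pn_outside\<close>)
    also have "\<dots> = 0" using assms by (simp add: Pn_outside Mop_apply)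
    finally show ?thesis .
  qed
  thus ?thesis using assms by (simp add: TW_def Mop_apply)
qed

section \<open>Vectors of \<open>H\<close> level by level\<close>

lemma level_norms_has_sum:
  assumes supp: "\<And>m y. s^m \<le> y \<Longrightarrow> w (m, y) = 0"
    and sm: "summable (\<lambda>m. (level_norm s m (\<lambda>y. w (m, y)))^2)"
  shows "((\<lambda>p. (cmod (w p))^2) has_sum (\<Sum>m. (level_norm s m (\<lambda>y. w (m, y)))^2)) UNIV"
proof -
  let ?h = "\<lambda>p. (cmod (w p))^2" and ?a = "\<lambda>m. (level_norm s m (\<lambda>y. w (m, y)))^2"
  have supp': "b < s^a" if "w (a, b) \<noteq> 0" for a b using supp[of a b] that by linarith
  have f: "((\<lambda>y. ?h (m, y)) has_sum ?a m) {..<s^m}" for m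
    by (simp add: level_norm_sq)
  have g: "(?a has_sum suminf ?a) UNIV"
    by (rule sums_nonneg_imp_has_sum) (use sm in \<open>auto simp: summable_sums\<close>)
  have su: "?h summable_on Sigma UNIV (\<lambda>m. {..<s^m})"
    by (rule summable_on_SigmaI[OF f]) (use g in \<open>auto simp: has_sum_iff\<close>)
  have "(?h has_sum suminf ?a) (Sigma UNIV (\<lambda>m. {..<s^m}))"
    by (rule has_sum_SigmaI[OF f g su])
  moreover have "(?h has_sum suminf ?a) (Sigma UNIV (\<lambda>m. {..<s^m})) \<longleftrightarrow> (?h has_sum suminf ?a) UNIV"
    by (rule has_sum_cong_neutral) (auto intro: supp' simp: supp)
  ultimately show ?thesis by simp
qed

lemma level_norms_summable_eq:
  assumes supp: "\<And>m y. s^m \<le> y \<Longrightarrow> w (m, y) = 0"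
    and su: "(\<lambda>p. (cmod (w p))^2) summable_on UNIV"
  shows "summable (\<lambda>m. (level_norm s m (\<lambda>y. w (m, y)))^2)"
    and "(\<Sum>m. (level_norm s m (\<lambda>y. w (m, y)))^2) = (\<Sum>\<^sub>\<infinity>p. (cmod (w p))^2)"
proof -
  let ?h = "\<lambda>p. (cmod (w p))^2" and ?a = "\<lambda>m. (level_norm s m (\<lambda>y. w (m, y)))^2"
  have supp': "b < s^a" if "w (a, b) \<noteq> 0" for a b using supp[of a b] that by linarith
  have f: "((\<lambda>y. ?h (m, y)) has_sum ?a m) {..<s^m}" for m
    by (simp add: level_norm_sq)
  have su2: "?h summable_on Sigma UNIV (\<lambda>m. {..<s^m})"
    by (rule summable_on_subset_banach[OF su]) auto
  have eq: "infsum ?h (Sigma UNIV (\<lambda>m. {..<s^m})) = infsum ?h UNIV"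
    by (rule infsum_cong_neutral) (auto intro: supp' simp: supp)
  have "(?h has_sum infsum ?h UNIV) (Sigma UNIV (\<lambda>m. {..<s^m}))"
    using su2 eq by (metis has_sum_infsum)
  hence "(?a has_sum infsum ?h UNIV) UNIV"
    by (rule has_sum_Sigma') (rule f)
  hence "?a sums infsum ?h UNIV" by (rule has_sum_imp_sums)
  thus "summable ?a" "suminf ?a = infsum ?h UNIV" by (auto simp: sums_iff)
qed

lemma inH_iff_levels:
  "inH s v \<longleftrightarrow> (\<forall>m y. s^m \<le> y \<longrightarrow> v (m, y) = 0) \<and> summable (\<lambda>m. (level_norm s m (\<lambda>y. v (m, y)))^2)"
proof
  assume H: "inH s v"
  hence supp: "\<And>m y. s^m \<le> y \<Longrightarrow> v (m, y) = 0" by (auto simp: inH_def Vset_def)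
  show "(\<forall>m y. s^m \<le> y \<longrightarrow> v (m, y) = 0) \<and> summable (\<lambda>m. (level_norm s m (\<lambda>y. v (m, y)))^2)"
    using supp level_norms_summable_eq(1)[of s v, OF supp] H by (auto simp: inH_def)
next
  assume H: "(\<forall>m y. s^m \<le> y \<longrightarrow> v (m, y) = 0) \<and> summable (\<lambda>m. (level_norm s m (\<lambda>y. v (m, y)))^2)"
  hence supp: "\<And>m y. s^m \<le> y \<Longrightarrow> v (m, y) = 0" by auto
  show "inH s v"
    unfolding inH_def
  proof (intro conjI allI impI)
    fix p assume "p \<notin> Vset s" thus "v p = 0" using supp by (cases p) (auto simp: Vset_def)
  next
    show "(\<lambda>p. (cmod (v p))\<^sup>2) summable_on UNIV"
      using level_norms_has_sum[of s v, OF supp] H by (auto simp: summable_on_def)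
  qed
qed

lemma l2norm_eq_levels:
  assumes "inH s v"
  shows "l2norm v = sqrt (\<Sum>m. (level_norm s m (\<lambda>y. v (m, y)))^2)"
proof -
  have supp: "\<And>m y. s^m \<le> y \<Longrightarrow> v (m, y) = 0" using assms by (auto simp: inH_iff_levels)
  have su: "(\<lambda>p. (cmod (v p))\<^sup>2) summable_on UNIV" using assms by (auto simp: inH_def)
  have e: "(\<Sum>\<^sub>\<infinity>p. (cmod (v p))^2) = (\<Sum>m. (level_norm s m (\<lambda>y. v (m, y)))^2)"
    using level_norms_summable_eq(2)[of s v, OF supp su] by simp
  show ?thesis unfolding l2norm_def e ..
qed

lemma l2norm_sq_eq_levels:
  assumes "inH s v"
  shows "(l2norm v)^2 = (\<Sum>m. (level_norm s m (\<lambda>y. v (m, y)))^2)"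
proof -
  have "summable (\<lambda>m. (level_norm s m (\<lambda>y. v (m, y)))^2)" using assms by (auto simp: inH_iff_levels)
  hence "0 \<le> (\<Sum>m. (level_norm s m (\<lambda>y. v (m, y)))^2)" by (rule suminf_nonneg) simp
  thus ?thesis unfolding l2norm_eq_levels[OF assms] by simp
qed

lemma square_add_le: "((x::real) + y)^2 \<le> 2 * x^2 + 2 * y^2"
proof -
  have "0 \<le> (x - y)^2" by simp
  thus ?thesis by (simp add: power2_eq_square algebra_simps)
qed

lemma level_norm_scale_le: "level_norm s m (\<lambda>y. a * u y) \<le> cmod a * level_norm s m u"
  by (rule level_norm_mult_le) auto

lemma inH_lincomb:
  assumes u: "inH s u" and v: "inH s v"
  shows "inH s (\<lambda>p. a * u p + b * v p)"
  unfolding inH_iff_levels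
proof (intro conjI allI impI)
  fix m y assume "s^m \<le> y" thus "a * u (m, y) + b * v (m, y) = 0"
    using u v by (simp add: inH_iff_levels)
next
  let ?U = "\<lambda>m. (level_norm s m (\<lambda>y. u (m, y)))^2" and ?V = "\<lambda>m. (level_norm s m (\<lambda>y. v (m, y)))^2"
  have su: "summable ?U" "summable ?V" using u v by (auto simp: inH_iff_levels)
  have S: "summable (\<lambda>m. 2 * (cmod a)^2 * ?U m + 2 * (cmod b)^2 * ?V m)"
    by (intro summable_add summable_mult su)
  have B: "norm ((level_norm s m (\<lambda>y. a * u (m, y) + b * v (m, y)))^2) \<le> 2 * (cmod a)^2 * ?U m + 2 * (cmod b)^2 * ?V m" for m
  proof -
    have "level_norm s m (\<lambda>y. a * u (m, y) + b * v (m, y)) \<le> cmod a * level_norm s m (\<lambda>y. u (m, y)) + cmod b * level_norm s m (\<lambda>y. v (m, y))"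
      by (rule order_trans[OF level_norm_add_le]) (intro add_mono level_norm_scale_le)
    hence "(level_norm s m (\<lambda>y. a * u (m, y) + b * v (m, y)))^2 \<le> (cmod a * level_norm s m (\<lambda>y. u (m, y)) + cmod b * level_norm s m (\<lambda>y. v (m, y)))^2"
      by (intro power_mono) auto
    also have "\<dots> \<le> 2 * (cmod a * level_norm s m (\<lambda>y. u (m, y)))^2 + 2 * (cmod b * level_norm s m (\<lambda>y. v (m, y)))^2"
      by (rule square_add_le)
    finally show ?thesis by (simp add: power_mult_distrib)
  qed
  show "summable (\<lambda>m. (level_norm s m (\<lambda>y. a * u (m, y) + b * v (m, y)))^2)"
    by (rule summable_comparison_test'[OF S, of 0]) (rule B)
qed

lemma bounded_imp_pointwise_convergent_subseq:
  fixes vs :: "nat \<Rightarrow> 'a::countable \<Rightarrow> 'b::heine_borel"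
  assumes bd: "\<And>p. bounded (range (\<lambda>k. vs k p))"
  shows "\<exists>r. strict_mono r \<and> (\<forall>p. convergent (\<lambda>k. vs (r k) p))"
proof -
  interpret D: subseqs "\<lambda>n r. convergent (\<lambda>k. vs (r k) (from_nat n :: 'a))"
  proof
    fix n and q :: "nat \<Rightarrow> nat" assume "strict_mono q"
    have "bounded (range (\<lambda>k. vs (q k) (from_nat n :: 'a)))"
      by (rule bounded_subset[OF bd]) auto
    then obtain l r where r: "strict_mono r" "((\<lambda>k. vs (q k) (from_nat n :: 'a)) \<circ> r) \<longlonglongrightarrow> l"
      using bounded_imp_convergent_subsequence by blast
    hence "convergent (\<lambda>k. vs ((q \<circ> r) k) (from_nat n :: 'a))"
      by (auto simp: o_def intro: convergentI)
    thus "\<exists>r'. strict_mono r' \<and> convergent (\<lambda>k. vs ((q \<circ> r') k) (from_nat n :: 'a))"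
      using r by blast
  qed
  have stab: "convergent (\<lambda>k. vs ((q \<circ> r) k) (from_nat n :: 'a))"
    if "strict_mono r" "convergent (\<lambda>k. vs (q k) (from_nat n :: 'a))" for r q n
    using convergent_subseq_convergent[OF that(2) that(1)] by (simp add: o_def)
  have "convergent (\<lambda>k. vs (D.diagseq k) p)" for p
  proof -
    let ?n = "to_nat p"
    have "convergent (\<lambda>k. vs ((D.diagseq \<circ> (+) (Suc ?n)) k) (from_nat ?n :: 'a))"
      by (rule D.diagseq_holds) (rule stab)
    hence "convergent (\<lambda>k. vs (D.diagseq (k + Suc ?n)) p)"
      by (simp add: o_def add.commute)
    thus ?thesis by (subst (asm) convergent_ignore_initial_segment)
  qed
  thus ?thesis using D.subseq_diagseq by blast
qed

lemma l2norm_nonneg: "0 \<le> l2norm v"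
proof -
  have "0 \<le> (\<Sum>\<^sub>\<infinity>p. (cmod (v p))^2)" by (rule infsum_nonneg) simp
  thus ?thesis by (simp add: l2norm_def)
qed

lemma level_norm_sq_le_l2norm_sq:
  assumes v: "inH s v"
  shows "(level_norm s m (\<lambda>y. v (m, y)))^2 \<le> (l2norm v)^2"
proof -
  have sm: "summable (\<lambda>m. (level_norm s m (\<lambda>y. v (m, y)))^2)" using v by (simp add: inH_iff_levels)
  have "(\<Sum>m\<in>{m}. (level_norm s m (\<lambda>y. v (m, y)))^2) \<le> (\<Sum>m. (level_norm s m (\<lambda>y. v (m, y)))^2)"
    by (rule sum_le_suminf[OF sm]) auto
  thus ?thesis by (simp add: l2norm_sq_eq_levels[OF v])
qed

lemma norm_sq_le_level_norm_sq:
  assumes y: "y < s^m"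
  shows "(cmod (u y))^2 \<le> (level_norm s m u)^2"
  unfolding level_norm_sq by (rule member_le_sum) (use y in auto)

lemma norm_le_l2norm_bound:
  assumes v: "inH s v" and B: "l2norm v \<le> B"
  shows "cmod (v p) \<le> B"
proof (cases p)
  case (Pair m y)
  have B0: "0 \<le> B" using B by (rule order_trans[rotated]) (rule l2norm_nonneg)
  show ?thesis
  proof (cases "y < s^m")
    case False thus ?thesis using v Pair B0 by (simp add: inH_iff_levels)
  next
    case True
    have "(cmod (v p))^2 \<le> B^2"
    proof -
      have "(cmod (v p))^2 \<le> (level_norm s m (\<lambda>y. v (m, y)))^2" using norm_sq_le_level_norm_sq[OF True] Pair by simp
      also have "\<dots> \<le> (l2norm v)^2" by (rule level_norm_sq_le_l2norm_sq[OF v])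
      also have "\<dots> \<le> B^2" by (intro power_mono B l2norm_nonneg)
      finally show ?thesis .
    qed
    thus ?thesis using B0 by (rule power2_le_imp_le)
  qed
qed

lemma inH_diff: "inH s u \<Longrightarrow> inH s v \<Longrightarrow> inH s (\<lambda>p. u p - v p)"
  using inH_lincomb[of s u v 1 "-1"] by simp

lemma l2norm_diff_sq_le:
  assumes u: "inH s u" and v: "inH s v"
  shows "(l2norm (\<lambda>p. u p - v p))^2 \<le> 2 * (l2norm u)^2 + 2 * (l2norm v)^2"
proof -
  let ?N = "\<lambda>w m. (level_norm s m (\<lambda>y. w (m, y)))^2"
  have su: "summable (?N u)" "summable (?N v)" "summable (?N (\<lambda>p. u p - v p))"
    using u v inH_diff[OF u v] by (simp_all add: inH_iff_levels)
  have "?N (\<lambda>p. u p - v p) m \<le> 2 * ?N u m + 2 * ?N v m" for m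
  proof -
    have "?N (\<lambda>p. u p - v p) m \<le> (level_norm s m (\<lambda>y. u (m, y)) + level_norm s m (\<lambda>y. v (m, y)))^2"
      using level_norm_diff_le[of s m "\<lambda>y. u (m, y)" "\<lambda>y. v (m, y)"] by (intro power_mono) auto
    also have "\<dots> \<le> 2 * ?N u m + 2 * ?N v m" by (rule square_add_le)
    finally show ?thesis .
  qed
  hence "(\<Sum>m. ?N (\<lambda>p. u p - v p) m) \<le> (\<Sum>m. 2 * ?N u m + 2 * ?N v m)"
    by (intro suminf_le summable_add summable_mult su)
  also have "\<dots> = 2 * (\<Sum>m. ?N u m) + 2 * (\<Sum>m. ?N v m)"
    by (simp add: suminf_add[symmetric] suminf_mult summable_mult su)
  finally show ?thesis
    unfolding l2norm_sq_eq_levels[OF u] l2norm_sq_eq_levels[OF v] l2norm_sq_eq_levels[OF inH_diff[OF u v]] .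
qed

lemma sum_level_norms_le_l2norm:
  assumes v: "inH s v"
  shows "(\<Sum>m<M. (level_norm s m (\<lambda>y. v (m, y)))^2) \<le> (l2norm v)^2"
proof -
  have "(\<Sum>m<M. (level_norm s m (\<lambda>y. v (m, y)))^2) \<le> (\<Sum>m. (level_norm s m (\<lambda>y. v (m, y)))^2)"
    using v by (intro sum_le_suminf) (auto simp: inH_iff_levels)
  thus ?thesis by (simp only: l2norm_sq_eq_levels[OF v])
qed

lemma inH_pointwise_limit:
  assumes vs: "\<And>k. inH s (vs k)" "\<And>k. l2norm (vs k) \<le> B"
    and lim: "\<And>p. (\<lambda>k. vs k p) \<longlonglongrightarrow> v p"
  shows "inH s v" and "l2norm v \<le> B"
proof -
  let ?N = "\<lambda>w m. (level_norm s m (\<lambda>y. w (m, y)))^2"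
  have B0: "0 \<le> B" using vs(2)[of 0] l2norm_nonneg[of "vs 0"] by linarith
  have supp: "v (m, y) = 0" if "s^m \<le> y" for m y
  proof -
    have "(\<lambda>k. vs k (m, y)) = (\<lambda>k. 0)" using vs(1) that by (simp add: inH_iff_levels fun_eq_iff)
    thus ?thesis using lim[of "(m, y)"] by (simp add: LIMSEQ_const_iff)
  qed
  have partial_vs: "(\<Sum>m<M. ?N (vs k) m) \<le> B^2" for k M
    using sum_level_norms_le_l2norm[OF vs(1)] power_mono[OF vs(2) l2norm_nonneg] by (rule order_trans)
  have partial_v: "(\<Sum>m<M. ?N v m) \<le> B^2" for M
  proof (rule LIMSEQ_le_const2)
    show "(\<lambda>k. \<Sum>m<M. ?N (vs k) m) \<longlonglongrightarrow> (\<Sum>m<M. ?N v m)"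
      unfolding level_norm_sq by (intro tendsto_intros lim)
  qed (use partial_vs in blast)
  have sum_v: "summable (?N v)"
  proof (rule bounded_imp_summable)
    show "(\<Sum>m\<le>n. ?N v m) \<le> B^2" for n
      using partial_v[of "Suc n"] by (simp add: lessThan_Suc_atMost)
  qed simp
  show vH: "inH s v" by (simp add: inH_iff_levels supp sum_v)
  have "(l2norm v)^2 \<le> B^2"
    using suminf_le_const[OF sum_v partial_v] by (simp add: l2norm_sq_eq_levels[OF vH])
  thus "l2norm v \<le> B" using B0 by (rule power2_le_imp_le)
qed

lemma inH_Uop:
  assumes v: "inH s v"
  shows "inH s (Uop \<theta> v)"
  unfolding inH_iff_levels
proof (intro conjI allI impI)
  fix m y assume "s^m \<le> y" thus "Uop \<theta> v (m, y) = 0" using v by (simp add: inH_iff_levels Uop_def)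
next
  have "level_norm s m (\<lambda>y. Uop \<theta> v (m, y)) = level_norm s m (\<lambda>y. v (m, y))" for m
    by (simp add: level_norm_def Uop_def norm_mult)
  thus "summable (\<lambda>m. (level_norm s m (\<lambda>y. Uop \<theta> v (m, y)))^2)" using v by (simp add: inH_iff_levels)
qed

section \<open>Operators acting levelwise\<close>

locale levelwise_op =
  fixes s :: nat and T :: op and Tm :: "nat \<Rightarrow> (nat \<Rightarrow> complex) \<Rightarrow> nat \<Rightarrow> complex" and C :: real
  assumes rep: "\<And>v m y. inH s v \<Longrightarrow> T v (m, y) = Tm m (\<lambda>y. v (m, y)) y"
    and out: "\<And>m u y. s^m \<le> y \<Longrightarrow> Tm m u y = 0"
    and lin: "\<And>m u w a b. Tm m (\<lambda>y. a * u y + b * w y) = (\<lambda>y. a * Tm m u y + b * Tm m w y)"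
    and bnd: "\<And>m u. level_norm s m (Tm m u) \<le> C * level_norm s m u"
    and dec: "\<And>e. 0 < e \<Longrightarrow> \<exists>M. \<forall>m\<ge>M. \<forall>u. level_norm s m (Tm m u) \<le> e * level_norm s m u"
begin

lemma level_rep: "inH s v \<Longrightarrow> (\<lambda>y. T v (m, y)) = Tm m (\<lambda>y. v (m, y))"
  by (simp add: rep)

lemma level_scale: "Tm m (\<lambda>y. a * u y) = (\<lambda>y. a * Tm m u y)"
  using lin[of m a u 0 u] by simp

lemma level_norm_sq_le: "(level_norm s m (Tm m u))^2 \<le> C^2 * (level_norm s m u)^2"
proof -
  have "(level_norm s m (Tm m u))^2 \<le> (C * level_norm s m u)^2" by (intro power_mono bnd) simp
  thus ?thesis by (simp add: power_mult_distrib)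
qed

lemma inH_T:
  assumes v: "inH s v" shows "inH s (T v)"
  unfolding inH_iff_levels
proof (intro conjI allI impI)
  fix m y assume "s^m \<le> y" thus "T v (m, y) = 0" by (simp add: rep[OF v] out)
next
  have S: "summable (\<lambda>m. C^2 * (level_norm s m (\<lambda>y. v (m, y)))^2)"
    using v by (intro summable_mult) (simp add: inH_iff_levels)
  have B: "norm ((level_norm s m (\<lambda>y. T v (m, y)))^2) \<le> C^2 * (level_norm s m (\<lambda>y. v (m, y)))^2" for m
    by (simp add: level_rep[OF v] level_norm_sq_le)
  show "summable (\<lambda>m. (level_norm s m (\<lambda>y. T v (m, y)))^2)"
    by (rule summable_comparison_test'[OF S, of 0]) (rule B)
qed

lemma T_lin:
  assumes u: "inH s u" and v: "inH s v"
  shows "T (\<lambda>p. a * u p + b * v p) = (\<lambda>p. a * T u p + b * T v p)"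
proof (rule ext)
  fix p show "T (\<lambda>p. a * u p + b * v p) p = a * T u p + b * T v p"
  proof (cases p)
    case (Pair m y)
    show ?thesis using inH_lincomb[OF u v, of a b] u v Pair by (simp add: rep lin)
  qed
qed

lemma T_gauge_invariant:
  assumes v: "inH s v"
  shows "Uop \<theta> (T (Uop (- \<theta>) v)) = T v"
proof -
  have inH_U: "inH s (Uop (- \<theta>) v)" by (rule inH_Uop[OF v])
  show ?thesis
  proof (rule ext)
    fix p show "Uop \<theta> (T (Uop (- \<theta>) v)) p = T v p"
    proof (cases p)
      case (Pair m y)
      have "T (Uop (- \<theta>) v) (m, y) = Tm m (\<lambda>y. cis (2 * pi * real m * (- \<theta>)) * v (m, y)) y"
        using inH_U by (simp add: rep Uop_def)
      also have "\<dots> = cis (2 * pi * real m * (- \<theta>)) * T v (m, y)"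
        using v by (simp add: level_scale rep)
      finally have "T (Uop (- \<theta>) v) (m, y) = cis (2 * pi * real m * (- \<theta>)) * T v (m, y)" .
      hence "Uop \<theta> (T (Uop (- \<theta>) v)) (m, y) = (cis (2 * pi * real m * \<theta>) * cis (2 * pi * real m * (- \<theta>))) * T v (m, y)"
        by (simp add: Uop_def)
      also have "cis (2 * pi * real m * \<theta>) * cis (2 * pi * real m * (- \<theta>)) = 1"
        by (simp add: cis_mult)
      finally show ?thesis using Pair by simp
    qed
  qed
qed

lemma T_diff: "inH s u \<Longrightarrow> inH s v \<Longrightarrow> T (\<lambda>p. u p - v p) = (\<lambda>p. T u p - T v p)"
  using T_lin[of u v 1 "-1"] by simp

text \<open>Finitely many levels form a finite-rank part; the remaining levels have small norm.\<close>
lemma l2norm_T_sq_le: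
  assumes v: "inH s v" and M: "\<And>m u. M \<le> m \<Longrightarrow> level_norm s m (Tm m u) \<le> e * level_norm s m u"
  shows "(l2norm (T v))^2 \<le> C^2 * (\<Sum>m<M. (level_norm s m (\<lambda>y. v (m, y)))^2) + e^2 * (l2norm v)^2"
proof -
  let ?b = "\<lambda>m. (level_norm s m (\<lambda>y. v (m, y)))^2"
  let ?a = "\<lambda>m. (level_norm s m (Tm m (\<lambda>y. v (m, y))))^2"
  let ?c = "\<lambda>m. if m < M then C^2 * ?b m else 0"
  have sa: "summable ?a" using inH_T[OF v] by (simp add: inH_iff_levels level_rep[OF v])
  have sb: "summable ?b" using v by (simp add: inH_iff_levels)
  have sc: "summable ?c" by (rule summable_finite[of "{..<M}"]) auto
  have "?a m \<le> ?c m + e^2 * ?b m" for m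
  proof (cases "m < M")
    case True
    thus ?thesis using level_norm_sq_le[of m "\<lambda>y. v (m, y)"] by (simp add: add_increasing2)
  next
    case False
    hence "?a m \<le> (e * level_norm s m (\<lambda>y. v (m, y)))^2" using M by (intro power_mono) auto
    thus ?thesis using False by (simp add: power_mult_distrib)
  qed
  hence "(\<Sum>m. ?a m) \<le> (\<Sum>m. ?c m + e^2 * ?b m)"
    by (intro suminf_le sa summable_add sc summable_mult sb)
  also have "\<dots> = (\<Sum>m. ?c m) + e^2 * (\<Sum>m. ?b m)"
    by (simp add: suminf_add[symmetric] suminf_mult sc summable_mult sb)
  also have "(\<Sum>m. ?c m) = (\<Sum>m<M. ?c m)"
    by (rule suminf_finite) auto
  finally show ?thesis
    unfolding l2norm_sq_eq_levels[OF v] l2norm_sq_eq_levels[OF inH_T[OF v]] level_rep[OF v]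
    by (simp add: sum_distrib_left)
qed

lemma tendsto_l2norm_T_zero:
  assumes d: "\<And>k. inH s (d k)" "\<And>k. l2norm (d k) \<le> D"
    and lim: "\<And>p. (\<lambda>k. d k p) \<longlonglongrightarrow> 0"
  shows "(\<lambda>k. l2norm (T (d k))) \<longlonglongrightarrow> 0"
proof (rule LIMSEQ_I)
  fix \<epsilon> :: real assume ep: "0 < \<epsilon>"
  have D0: "0 \<le> D" using d(2)[of 0] l2norm_nonneg[of "d 0"] by linarith
  define e where "e = \<epsilon> / (2 * (D + 1))"
  have e0: "0 < e" using ep D0 by (simp add: e_def)
  have eD: "e^2 * D^2 \<le> \<epsilon>^2 / 4"
  proof -
    have "e * D \<le> \<epsilon> / 2" using ep D0 by (simp add: e_def field_simps)
    hence "(e * D)^2 \<le> (\<epsilon> / 2)^2" by (intro power_mono) (use e0 D0 in auto)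
    thus ?thesis by (simp add: power_mult_distrib power_divide)
  qed
  obtain M where M: "\<And>m u. M \<le> m \<Longrightarrow> level_norm s m (Tm m u) \<le> e * level_norm s m u"
    using dec[OF e0] by blast
  define F where "F = (\<lambda>k. \<Sum>m<M. (level_norm s m (\<lambda>y. d k (m, y)))^2)"
  have "(\<lambda>k. (level_norm s m (\<lambda>y. d k (m, y)))^2) \<longlonglongrightarrow> 0" for m
    unfolding level_norm_sq
    by (intro tendsto_null_sum) (use tendsto_power[OF tendsto_norm[OF lim], of _ 2] in simp)
  hence "(\<lambda>k. C^2 * F k) \<longlonglongrightarrow> 0"
    unfolding F_def by (intro tendsto_mult_right_zero tendsto_null_sum)
  then obtain k0 where k0: "\<And>k. k0 \<le> k \<Longrightarrow> C^2 * F k < \<epsilon>^2 / 4"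
    using LIMSEQ_D[of _ 0 "\<epsilon>^2/4"] ep by fastforce
  have "l2norm (T (d k)) < \<epsilon>" if k: "k0 \<le> k" for k
  proof -
    have "(l2norm (T (d k)))^2 \<le> C^2 * F k + e^2 * (l2norm (d k))^2"
      unfolding F_def by (rule l2norm_T_sq_le[OF d(1) M])
    moreover have "e^2 * (l2norm (d k))^2 \<le> e^2 * D^2"
      by (intro mult_left_mono power_mono d(2) l2norm_nonneg) simp
    moreover have "0 < \<epsilon>^2" using ep by simp
    ultimately have "(l2norm (T (d k)))^2 < \<epsilon>^2" using k0[OF k] eD by linarith
    thus ?thesis using ep by (simp add: power_less_imp_less_base)
  qed
  thus "\<exists>k0. \<forall>k\<ge>k0. norm (l2norm (T (d k)) - 0) < \<epsilon>"
    using l2norm_nonneg by auto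
qed

lemma T_compact_subseq:
  fixes vs :: "nat \<Rightarrow> nat \<times> nat \<Rightarrow> complex"
  assumes vs: "\<And>k. inH s (vs k) \<and> l2norm (vs k) \<le> B"
  shows "\<exists>r w. strict_mono r \<and> inH s w \<and> (\<lambda>k. l2norm (T (vs (r k)) - w)) \<longlonglongrightarrow> 0"
proof -
  have "\<forall>x\<in>range (\<lambda>k. vs k p). norm x \<le> B" for p using vs by (auto intro!: norm_le_l2norm_bound)
  hence "bounded (range (\<lambda>k. vs k p))" for p unfolding bounded_iff by blast
  then obtain r where r: "strict_mono r" and cv: "\<And>p. convergent (\<lambda>k. vs (r k) p)"
    using bounded_imp_pointwise_convergent_subseq by blast
  define v where "v = (\<lambda>p. lim (\<lambda>k. vs (r k) p))"
  have lim: "(\<lambda>k. vs (r k) p) \<longlonglongrightarrow> v p" for p using cv by (simp add: v_def convergent_LIMSEQ_iff)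
  have vsH: "inH s (vs (r k))" "l2norm (vs (r k)) \<le> B" for k using vs by auto
  have vH: "inH s v" and vB: "l2norm v \<le> B" using inH_pointwise_limit[OF vsH lim] by auto
  define d where "d = (\<lambda>k p. vs (r k) p - v p)"
  have dH: "inH s (d k)" for k unfolding d_def by (intro inH_diff vsH vH)
  have "(l2norm (d k))^2 \<le> (2 * B)^2" for k
  proof -
    have "(l2norm (vs (r k)))^2 \<le> B^2" by (rule power_mono[OF vsH(2) l2norm_nonneg])
    moreover have "(l2norm v)^2 \<le> B^2" by (rule power_mono[OF vB l2norm_nonneg])
    moreover have "(2 * B)^2 = 4 * B^2" by (simp add: power2_eq_square)
    ultimately show ?thesis
      using l2norm_diff_sq_le[OF vsH(1) vH, of k] unfolding d_def by linarith
  qed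
  hence dB: "l2norm (d k) \<le> 2 * B" for k
    by (rule power2_le_imp_le) (use vB l2norm_nonneg[of v] in linarith)
  have "(\<lambda>k. d k p) \<longlonglongrightarrow> 0" for p
    using tendsto_diff[OF lim[of p] tendsto_const[of "v p"]] by (simp add: d_def)
  hence "(\<lambda>k. l2norm (T (d k))) \<longlonglongrightarrow> 0" by (rule tendsto_l2norm_T_zero[OF dH dB])
  moreover have "T (d k) = T (vs (r k)) - T v" for k
    unfolding d_def fun_diff_def by (rule T_diff[OF vsH(1) vH])
  ultimately have "(\<lambda>k. l2norm (T (vs (r k)) - T v)) \<longlonglongrightarrow> 0" by simp
  thus ?thesis using r inH_T[OF vH] by blast
qed

lemma compact_inv_T: "compact_inv s T"
  unfolding compact_inv_def compact_op_def
proof (intro conjI allI impI)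
  show "inH s (T v)" if "inH s v" for v by (rule inH_T[OF that])
  show "T (\<lambda>p. a * u p + b * v p) = (\<lambda>p. a * T u p + b * T v p)" if "inH s u" "inH s v" for u v a b
    by (rule T_lin[OF that])
  show "\<exists>r w. strict_mono r \<and> inH s w \<and> (\<lambda>k. l2norm (T (vs (r k)) - w)) \<longlonglongrightarrow> 0"
    if "\<forall>k. inH s (vs k) \<and> l2norm (vs k) \<le> B" for vs :: "nat \<Rightarrow> nat \<times> nat \<Rightarrow> complex" and B
    using T_compact_subseq[of vs B] that by blast
  show "Uop \<theta> (T (Uop (- \<theta>) v)) = T v" if "inH s v" for \<theta> v by (rule T_gauge_invariant[OF that])
qed

end

section \<open>Symbols depending on finitely many digits\<close>

definition depends_on_digits :: "nat \<Rightarrow> nat \<Rightarrow> (nat \<Rightarrow> complex) \<Rightarrow> bool" where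
  "depends_on_digits s K F \<longleftrightarrow> (\<forall>y. F y = F (y mod s^K))"

lemma cond_exp_mult_local:
  assumes Kk: "K \<le> k" and F: "depends_on_digits s K F"
  shows "cond_exp s m k (\<lambda>y. F y * u y) y = F y * cond_exp s m k u y"
proof (cases "y < s^m")
  case False thus ?thesis by simp
next
  case True
  have "(\<Sum>y'\<in>res_class s m k y. F y' * u y') = (\<Sum>y'\<in>res_class s m k y. F y * u y')"
  proof (intro sum.cong refl)
    fix y' assume "y' \<in> res_class s m k y"
    hence "y' mod s^k = y mod s^k" by (simp add: res_class_def)
    hence "y' mod s^K = y mod s^K" by (rule mod_eq_power_le[OF Kk])
    hence "F y' = F y" using F unfolding depends_on_digits_def by metis
    thus "F y' * u y' = F y * u y'" by simp
  qed
  thus ?thesis using True by (simp add: cond_exp_inside sum_distrib_left)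
qed

lemma mart_diff_mult_local:
  assumes Kk: "K < k" and F: "depends_on_digits s K F"
  shows "mart_diff s m k (\<lambda>y. F y * u y) y = F y * mart_diff s m k u y"
  using Kk by (simp add: mart_diff_def cond_exp_mult_local[OF _ F] algebra_simps)

text \<open>Operators of this form are diagonal with respect to the \<open>D\<^sub>k\<close> with \<open>k > K\<close>, so they compose
by multiplying their symbols.\<close>
definition mart_diag :: "nat \<Rightarrow> nat \<Rightarrow> nat \<Rightarrow> (nat \<Rightarrow> nat \<Rightarrow> complex) \<Rightarrow> (nat \<Rightarrow> complex) \<Rightarrow> (nat \<Rightarrow> complex) \<Rightarrow> nat \<Rightarrow> complex" where
  "mart_diag s m K \<psi> c u y = (\<Sum>k\<in>{K<..m}. \<psi> k y * mart_diff s m k u y) + c y * u y"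

lemma mart_diff_mart_diag:
  assumes s: "0 < s" and k: "K < k" "k \<le> m" and loc: "\<And>l. depends_on_digits s K (\<psi> l)" "depends_on_digits s K c"
  shows "mart_diff s m k (mart_diag s m K \<psi> c u) y = (\<psi> k y + c y) * mart_diff s m k u y"
proof -
  have "mart_diff s m k (mart_diag s m K \<psi> c u) y = (\<Sum>l\<in>{K<..m}. mart_diff s m k (\<lambda>y. \<psi> l y * mart_diff s m l u y) y) + mart_diff s m k (\<lambda>y. c y * u y) y"
    unfolding mart_diag_def[abs_def] by (simp add: mart_diff_add mart_diff_sum)
  also have "(\<Sum>l\<in>{K<..m}. mart_diff s m k (\<lambda>y. \<psi> l y * mart_diff s m l u y) y) = (\<Sum>l\<in>{K<..m}. if k = l then \<psi> k y * mart_diff s m k u y else 0)"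
  proof (intro sum.cong refl)
    fix l assume l: "l \<in> {K<..m}"
    have "mart_diff s m k (\<lambda>y. \<psi> l y * mart_diff s m l u y) y = \<psi> l y * mart_diff s m k (mart_diff s m l u) y"
      by (rule mart_diff_mult_local[OF k(1) loc(1)])
    also have "\<dots> = (if k = l then \<psi> k y * mart_diff s m k u y else 0)"
      using l k by (simp add: mart_diff_mart_diff[OF s])
    finally show "mart_diff s m k (\<lambda>y. \<psi> l y * mart_diff s m l u y) y = (if k = l then \<psi> k y * mart_diff s m k u y else 0)" .
  qed
  also have "\<dots> = \<psi> k y * mart_diff s m k u y" using k by (simp add: sum.delta)
  also have "mart_diff s m k (\<lambda>y. c y * u y) y = c y * mart_diff s m k u y" by (rule mart_diff_mult_local[OF k(1) loc(2)])
  finally show ?thesis by (simp add: algebra_simps)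
qed

lemma mart_diag_mart_diag:
  assumes s: "0 < s" and loc: "\<And>l. depends_on_digits s K (\<psi>' l)" "depends_on_digits s K c'"
  shows "mart_diag s m K \<psi> c (mart_diag s m K \<psi>' c' u) y =
    mart_diag s m K (\<lambda>k y. \<psi> k y * \<psi>' k y + \<psi> k y * c' y + c y * \<psi>' k y) (\<lambda>y. c y * c' y) u y"
proof -
  have "mart_diag s m K \<psi> c (mart_diag s m K \<psi>' c' u) y =
     (\<Sum>k\<in>{K<..m}. \<psi> k y * ((\<psi>' k y + c' y) * mart_diff s m k u y)) + c y * mart_diag s m K \<psi>' c' u y"
    unfolding mart_diag_def[of s m K \<psi> c]
    by (intro arg_cong2[where f="(+)"] sum.cong refl) (auto simp: mart_diff_mart_diag[OF s _ _ loc])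
  also have "\<dots> = mart_diag s m K (\<lambda>k y. \<psi> k y * \<psi>' k y + \<psi> k y * c' y + c y * \<psi>' k y) (\<lambda>y. c y * c' y) u y"
    by (simp add: mart_diag_def sum_distrib_left sum.distrib algebra_simps)
  finally show ?thesis .
qed

lemma depends_on_digits_diff: "depends_on_digits s K F \<Longrightarrow> depends_on_digits s K G \<Longrightarrow> depends_on_digits s K (\<lambda>y. F y - G y)"
  unfolding depends_on_digits_def by metis

lemma depends_on_digits_mult: "depends_on_digits s K F \<Longrightarrow> depends_on_digits s K G \<Longrightarrow> depends_on_digits s K (\<lambda>y. F y * G y)"
  unfolding depends_on_digits_def by metis

lemma depends_on_digits_mono:
  "K \<le> K' \<Longrightarrow> depends_on_digits s K F \<Longrightarrow> depends_on_digits s K' F"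
  unfolding depends_on_digits_def by (metis le_imp_power_dvd mod_mod_cancel)

lemma level_TW_eq_mart_diag:
  assumes s: "0 < s" and NK: "N + K \<le> m" and locH: "\<And>n. depends_on_digits s K (H n)" and locHi: "depends_on_digits s K Hi"
    and stab: "\<And>n. N \<le> n \<Longrightarrow> H n = Hi"
  shows "level_TW s m H Hi u y = mart_diag s m K (\<lambda>k y. H (m-k) y - Hi y) Hi u y"
proof -
  have Km: "K \<le> m" using NK by simp
  have split: "{..m} = {..K} \<union> {K<..m}" using Km by auto
  have "(\<Sum>k\<le>m. mart_diff s m k (\<lambda>y'. (H (m-k) y' - Hi y') * mart_diff s m k u y') y)
      = (\<Sum>k\<le>K. mart_diff s m k (\<lambda>y'. (H (m-k) y' - Hi y') * mart_diff s m k u y') y)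
        + (\<Sum>k\<in>{K<..m}. mart_diff s m k (\<lambda>y'. (H (m-k) y' - Hi y') * mart_diff s m k u y') y)"
    unfolding split by (rule sum.union_disjoint) auto
  also have "(\<Sum>k\<le>K. mart_diff s m k (\<lambda>y'. (H (m-k) y' - Hi y') * mart_diff s m k u y') y) = 0"
  proof (rule sum.neutral, rule ballI)
    fix k assume "k \<in> {..K}"
    hence "N \<le> m - k" using NK by auto
    hence "H (m-k) = Hi" by (rule stab)
    thus "mart_diff s m k (\<lambda>y'. (H (m-k) y' - Hi y') * mart_diff s m k u y') y = 0" by simp
  qed
  also have "(\<Sum>k\<in>{K<..m}. mart_diff s m k (\<lambda>y'. (H (m-k) y' - Hi y') * mart_diff s m k u y') y)
      = (\<Sum>k\<in>{K<..m}. (H (m-k) y - Hi y) * mart_diff s m k u y)"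
  proof (intro sum.cong refl)
    fix k assume k: "k \<in> {K<..m}"
    have "mart_diff s m k (\<lambda>y'. (H (m-k) y' - Hi y') * mart_diff s m k u y') y = (H (m-k) y - Hi y) * mart_diff s m k (mart_diff s m k u) y"
      using k by (intro mart_diff_mult_local) (auto intro: depends_on_digits_diff locH locHi)
    thus "mart_diff s m k (\<lambda>y'. (H (m-k) y' - Hi y') * mart_diff s m k u y') y = (H (m-k) y - Hi y) * mart_diff s m k u y"
      using k by (simp add: mart_diff_mart_diff[OF s])
  qed
  finally show ?thesis by (simp add: level_TW_def mart_diag_def)
qed

lemma mart_diag_cong: "(\<And>k y. \<psi> k y = \<psi>' k y) \<Longrightarrow> mart_diag s m K \<psi> c u y = mart_diag s m K \<psi>' c u y"
  by (simp add: mart_diag_def)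

lemma level_TW_mult_exact:
  assumes s: "0 < s" and NK: "N + K \<le> m"
    and locH: "\<And>n. depends_on_digits s K (H n)" and locHi: "depends_on_digits s K Hi"
    and locH': "\<And>n. depends_on_digits s K (H' n)" and locHi': "depends_on_digits s K Hi'"
    and stab: "\<And>n. N \<le> n \<Longrightarrow> H n = Hi" and stab': "\<And>n. N \<le> n \<Longrightarrow> H' n = Hi'"
  shows "level_TW s m H Hi (level_TW s m H' Hi' u) y = level_TW s m (\<lambda>n y. H n y * H' n y) (\<lambda>y. Hi y * Hi' y) u y"
proof -
  have inner: "level_TW s m H' Hi' u = mart_diag s m K (\<lambda>k y. H' (m-k) y - Hi' y) Hi' u"
    by (rule ext) (rule level_TW_eq_mart_diag[OF s NK locH' locHi' stab'])
  have "level_TW s m H Hi (level_TW s m H' Hi' u) y = mart_diag s m K (\<lambda>k y. H (m-k) y - Hi y) Hi (mart_diag s m K (\<lambda>k y. H' (m-k) y - Hi' y) Hi' u) y"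
    unfolding inner by (rule level_TW_eq_mart_diag[OF s NK locH locHi stab])
  also have "\<dots> = mart_diag s m K (\<lambda>k y. (H (m-k) y - Hi y) * (H' (m-k) y - Hi' y) + (H (m-k) y - Hi y) * Hi' y + Hi y * (H' (m-k) y - Hi' y)) (\<lambda>y. Hi y * Hi' y) u y"
    by (rule mart_diag_mart_diag[OF s]) (intro depends_on_digits_diff locH' locHi', rule locHi')
  also have "\<dots> = mart_diag s m K (\<lambda>k y. H (m-k) y * H' (m-k) y - Hi y * Hi' y) (\<lambda>y. Hi y * Hi' y) u y"
    by (rule mart_diag_cong) (simp add: algebra_simps)
  also have "\<dots> = level_TW s m (\<lambda>n y. H n y * H' n y) (\<lambda>y. Hi y * Hi' y) u y"
    by (rule level_TW_eq_mart_diag[symmetric, OF s NK]) (auto intro: depends_on_digits_mult locH locH' locHi locHi' simp: stab stab')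
  finally show ?thesis .
qed

lemma norm_mult_diff_le:
  assumes "cmod h \<le> Cb + d" "cmod (h' - g') \<le> d" "cmod (h - g) \<le> d" "cmod g' \<le> Cb" "0 \<le> d"
  shows "cmod (h * h' - g * g') \<le> (Cb + d) * d + d * Cb"
proof -
  have "h * h' - g * g' = h * (h' - g') + (h - g) * g'" by (simp add: algebra_simps)
  hence "cmod (h * h' - g * g') \<le> cmod h * cmod (h' - g') + cmod (h - g) * cmod g'"
    by (metis norm_mult norm_triangle_ineq)
  also have "\<dots> \<le> (Cb + d) * d + d * Cb"
  proof -
    have "0 \<le> Cb + d" using assms(1) norm_ge_zero[of h] by linarith
    thus ?thesis using assms by (intro add_mono mult_mono) auto
  qed
  finally show ?thesis .
qed

definition local_stationary_approx ::
  "nat \<Rightarrow> real \<Rightarrow> (nat \<Rightarrow> nat \<Rightarrow> complex) \<Rightarrow> (nat \<Rightarrow> complex) \<Rightarrow> nat \<Rightarrow> nat \<Rightarrow>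
   (nat \<Rightarrow> nat \<Rightarrow> complex) \<Rightarrow> (nat \<Rightarrow> complex) \<Rightarrow> bool" where
  "local_stationary_approx s \<delta> G Gi N K H Hi \<longleftrightarrow>
     (\<forall>n. depends_on_digits s K (H n)) \<and> depends_on_digits s K Hi \<and> (\<forall>n\<ge>N. H n = Hi) \<and>
     (\<forall>n y. cmod (G n y - H n y) \<le> \<delta>) \<and> (\<forall>y. cmod (Gi y - Hi y) \<le> \<delta>)"

lemma local_stationary_approx_mono:
  assumes "N \<le> N'" "K \<le> K'" "local_stationary_approx s \<delta> G Gi N K H Hi"
  shows "local_stationary_approx s \<delta> G Gi N' K' H Hi"
  using assms depends_on_digits_mono[OF \<open>K \<le> K'\<close>] by (auto simp: local_stationary_approx_def)

text \<open>Cut off at \<open>s\<^sup>m\<close>, where \<open>level_TW\<close> does not vanish.\<close>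
definition level_semicomm ::
  "nat \<Rightarrow> nat \<Rightarrow> (nat \<Rightarrow> nat \<Rightarrow> complex) \<Rightarrow> (nat \<Rightarrow> complex) \<Rightarrow> (nat \<Rightarrow> nat \<Rightarrow> complex) \<Rightarrow>
   (nat \<Rightarrow> complex) \<Rightarrow> (nat \<Rightarrow> complex) \<Rightarrow> nat \<Rightarrow> complex" where
  "level_semicomm s m G Gi G' Gi' u y = (if y < s^m then
     level_TW s m G Gi (level_TW s m G' Gi' u) y - level_TW s m (\<lambda>n y. G n y * G' n y) (\<lambda>y. Gi y * Gi' y) u y
   else 0)"

lemma level_semicomm_lincomb:
  "level_semicomm s m G Gi G' Gi' (\<lambda>y. a * u y + b * w y)
     = (\<lambda>y. a * level_semicomm s m G Gi G' Gi' u y + b * level_semicomm s m G Gi G' Gi' w y)"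
proof -
  have "level_TW s m G' Gi' (\<lambda>y. a * u y + b * w y)
      = (\<lambda>y. a * level_TW s m G' Gi' u y + b * level_TW s m G' Gi' w y)"
    by (rule ext) (rule level_TW_lincomb)
  thus ?thesis by (auto simp: level_semicomm_def level_TW_lincomb algebra_simps)
qed

lemma level_semicomm_norm_bound:
  assumes s: "0 < s"
    and bG: "\<And>n y. cmod (G n y) \<le> Cb" and bGi: "\<And>y. cmod (Gi y) \<le> Cb"
    and bG': "\<And>n y. cmod (G' n y) \<le> Cb" and bGi': "\<And>y. cmod (Gi' y) \<le> Cb"
  shows "level_norm s m (level_semicomm s m G Gi G' Gi' u) \<le> 12 * Cb^2 * level_norm s m u"
proof -
  have Cb0: "0 \<le> Cb" using bGi[of 0] by (rule order_trans[rotated]) simp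
  have "level_norm s m (level_TW s m G Gi (level_TW s m G' Gi' u)) \<le> 3 * Cb * (3 * Cb * level_norm s m u)"
    using level_TW_norm_le_symbol_bound[OF s bG bGi, where m=m and u="level_TW s m G' Gi' u"]
      level_TW_norm_le_symbol_bound[OF s bG' bGi', where m=m and u=u] Cb0
    by (meson mult_left_mono order_trans zero_le_mult_iff zero_le_numeral)
  moreover have "level_norm s m (level_TW s m (\<lambda>n y. G n y * G' n y) (\<lambda>y. Gi y * Gi' y) u)
      \<le> 3 * (Cb * Cb) * level_norm s m u"
  proof (rule level_TW_norm_le_symbol_bound[OF s])
    show "cmod (G n y * G' n y) \<le> Cb * Cb" for n y
      unfolding norm_mult by (intro mult_mono bG bG') (use Cb0 in auto)
    show "cmod (Gi y * Gi' y) \<le> Cb * Cb" for y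
      unfolding norm_mult by (intro mult_mono bGi bGi') (use Cb0 in auto)
  qed
  moreover have "level_norm s m (level_semicomm s m G Gi G' Gi' u)
      \<le> level_norm s m (level_TW s m G Gi (level_TW s m G' Gi' u))
        + level_norm s m (level_TW s m (\<lambda>n y. G n y * G' n y) (\<lambda>y. Gi y * Gi' y) u)"
    unfolding level_semicomm_def
    by (rule order_trans[OF eq_refl level_norm_diff_le], rule level_norm_cong) simp
  ultimately show ?thesis by (simp add: power2_eq_square algebra_simps)
qed

lemma level_semicomm_eq_error_terms:
  assumes s: "0 < s" and m: "N + K \<le> m" and y: "y < s^m"
    and lH: "\<And>n. depends_on_digits s K (H n)" and lHi: "depends_on_digits s K Hi"
    and lH': "\<And>n. depends_on_digits s K (H' n)" and lHi': "depends_on_digits s K Hi'"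
    and sH: "\<And>n. N \<le> n \<Longrightarrow> H n = Hi" and sH': "\<And>n. N \<le> n \<Longrightarrow> H' n = Hi'"
  shows "level_semicomm s m G Gi G' Gi' u y =
      level_TW s m (\<lambda>n y. G n y - H n y) (\<lambda>y. Gi y - Hi y) (level_TW s m G' Gi' u) y
    + level_TW s m H Hi (level_TW s m (\<lambda>n y. G' n y - H' n y) (\<lambda>y. Gi' y - Hi' y) u) y
    + level_TW s m (\<lambda>n y. H n y * H' n y - G n y * G' n y) (\<lambda>y. Hi y * Hi' y - Gi y * Gi' y) u y"
proof -
  let ?w = "level_TW s m G' Gi' u" and ?w' = "level_TW s m H' Hi' u"
  have wD: "(\<lambda>y. ?w y - ?w' y) = level_TW s m (\<lambda>n y. G' n y - H' n y) (\<lambda>y. Gi' y - Hi' y) u"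
    by (rule ext) (rule level_TW_diff_symbol)
  have "level_TW s m G Gi ?w y - level_TW s m H Hi ?w y
      = level_TW s m (\<lambda>n y. G n y - H n y) (\<lambda>y. Gi y - Hi y) ?w y"
    by (rule level_TW_diff_symbol)
  moreover have "level_TW s m H Hi ?w y - level_TW s m H Hi ?w' y
      = level_TW s m H Hi (level_TW s m (\<lambda>n y. G' n y - H' n y) (\<lambda>y. Gi' y - Hi' y) u) y"
    by (simp add: level_TW_diff wD)
  moreover have "level_TW s m H Hi ?w' y = level_TW s m (\<lambda>n y. H n y * H' n y) (\<lambda>y. Hi y * Hi' y) u y"
    by (rule level_TW_mult_exact[OF s m lH lHi lH' lHi' sH sH'])
  moreover have "level_TW s m (\<lambda>n y. H n y * H' n y) (\<lambda>y. Hi y * Hi' y) u y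
      - level_TW s m (\<lambda>n y. G n y * G' n y) (\<lambda>y. Gi y * Gi' y) u y
      = level_TW s m (\<lambda>n y. H n y * H' n y - G n y * G' n y) (\<lambda>y. Hi y * Hi' y - Gi y * Gi' y) u y"
    by (rule level_TW_diff_symbol)
  ultimately show ?thesis using y by (simp add: level_semicomm_def algebra_simps)
qed

lemma level_semicomm_norm_le:
  assumes s: "0 < s" and m: "N + K \<le> m" and d0: "0 \<le> \<delta>"
    and bG: "\<And>n y. cmod (G n y) \<le> Cb" and bGi: "\<And>y. cmod (Gi y) \<le> Cb"
    and bG': "\<And>n y. cmod (G' n y) \<le> Cb" and bGi': "\<And>y. cmod (Gi' y) \<le> Cb"
    and A: "local_stationary_approx s \<delta> G Gi N K H Hi"
    and A': "local_stationary_approx s \<delta> G' Gi' N K H' Hi'"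
  shows "level_norm s m (level_semicomm s m G Gi G' Gi' u) \<le> \<delta> * (24 * Cb + 12 * \<delta>) * level_norm s m u"
proof -
  have Cb0: "0 \<le> Cb" using bGi[of 0] by (rule order_trans[rotated]) simp
  from A have lH: "\<And>n. depends_on_digits s K (H n)" and lHi: "depends_on_digits s K Hi"
    and sH: "\<And>n. N \<le> n \<Longrightarrow> H n = Hi"
    and aG: "\<And>n y. cmod (G n y - H n y) \<le> \<delta>" and aGi: "\<And>y. cmod (Gi y - Hi y) \<le> \<delta>"
    unfolding local_stationary_approx_def by auto
  from A' have lH': "\<And>n. depends_on_digits s K (H' n)" and lHi': "depends_on_digits s K Hi'"
    and sH': "\<And>n. N \<le> n \<Longrightarrow> H' n = Hi'"
    and aG': "\<And>n y. cmod (G' n y - H' n y) \<le> \<delta>" and aGi': "\<And>y. cmod (Gi' y - Hi' y) \<le> \<delta>"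
    unfolding local_stationary_approx_def by auto
  have bH: "cmod (H n y) \<le> Cb + \<delta>" for n y
    using norm_triangle_ineq4[of "G n y" "G n y - H n y"] bG[of n y] aG[of n y] by simp
  have bHi: "cmod (Hi y) \<le> Cb + \<delta>" for y
    using norm_triangle_ineq4[of "Gi y" "Gi y - Hi y"] bGi[of y] aGi[of y] by simp
  let ?A1 = "level_TW s m (\<lambda>n y. G n y - H n y) (\<lambda>y. Gi y - Hi y) (level_TW s m G' Gi' u)"
  let ?D = "level_TW s m (\<lambda>n y. G' n y - H' n y) (\<lambda>y. Gi' y - Hi' y) u"
  let ?A3 = "level_TW s m (\<lambda>n y. H n y * H' n y - G n y * G' n y) (\<lambda>y. Hi y * Hi' y - Gi y * Gi' y) u"
  have n1: "level_norm s m ?A1 \<le> 3 * \<delta> * (3 * Cb * level_norm s m u)"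
  proof -
    have "level_norm s m ?A1 \<le> 3 * \<delta> * level_norm s m (level_TW s m G' Gi' u)"
      by (rule level_TW_norm_le_symbol_bound[OF s]) (use aG aGi in auto)
    also have "level_norm s m (level_TW s m G' Gi' u) \<le> 3 * Cb * level_norm s m u"
      by (rule level_TW_norm_le_symbol_bound[OF s bG' bGi'])
    finally show ?thesis using d0 by (simp add: mult_left_mono)
  qed
  have n2: "level_norm s m (level_TW s m H Hi ?D) \<le> 3 * (Cb + \<delta>) * (3 * \<delta> * level_norm s m u)"
  proof -
    have "level_norm s m (level_TW s m H Hi ?D) \<le> 3 * (Cb + \<delta>) * level_norm s m ?D"
      by (rule level_TW_norm_le_symbol_bound[OF s bH bHi])
    also have "level_norm s m ?D \<le> 3 * \<delta> * level_norm s m u"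
      by (rule level_TW_norm_le_symbol_bound[OF s]) (use aG' aGi' in auto)
    finally show ?thesis using d0 Cb0 by (simp add: mult_left_mono)
  qed
  have n3: "level_norm s m ?A3 \<le> 3 * ((Cb + \<delta>) * \<delta> + \<delta> * Cb) * level_norm s m u"
  proof (rule level_TW_norm_le_symbol_bound[OF s])
    show "cmod (H n y * H' n y - G n y * G' n y) \<le> (Cb + \<delta>) * \<delta> + \<delta> * Cb" for n y
      by (rule norm_mult_diff_le) (use bH aG' aG bG' d0 in \<open>auto simp: norm_minus_commute\<close>)
    show "cmod (Hi y * Hi' y - Gi y * Gi' y) \<le> (Cb + \<delta>) * \<delta> + \<delta> * Cb" for y
      by (rule norm_mult_diff_le) (use bHi aGi' aGi bGi' d0 in \<open>auto simp: norm_minus_commute\<close>)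
  qed
  have "level_norm s m (level_semicomm s m G Gi G' Gi' u)
      = level_norm s m (\<lambda>y. (?A1 y + level_TW s m H Hi ?D y) + ?A3 y)"
    by (rule level_norm_cong)
      (rule level_semicomm_eq_error_terms[OF s m _ lH lHi lH' lHi' sH sH'])
  also have "\<dots> \<le> (level_norm s m ?A1 + level_norm s m (level_TW s m H Hi ?D)) + level_norm s m ?A3"
    by (rule order_trans[OF level_norm_add_le]) (rule add_right_mono, rule level_norm_add_le)
  also have "\<dots> \<le> \<delta> * (24 * Cb + 12 * \<delta>) * level_norm s m u"
    using n1 n2 n3 by (simp add: algebra_simps)
  finally show ?thesis .
qed

lemma level_semicomm_decay:
  assumes s: "0 < s" and e: "0 < e"
    and bG: "\<And>n y. cmod (G n y) \<le> Cb" and bGi: "\<And>y. cmod (Gi y) \<le> Cb"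
    and bG': "\<And>n y. cmod (G' n y) \<le> Cb" and bGi': "\<And>y. cmod (Gi' y) \<le> Cb"
    and A: "\<And>\<delta>. 0 < \<delta> \<Longrightarrow> \<exists>N K H Hi. local_stationary_approx s \<delta> G Gi N K H Hi"
    and A': "\<And>\<delta>. 0 < \<delta> \<Longrightarrow> \<exists>N K H Hi. local_stationary_approx s \<delta> G' Gi' N K H Hi"
  shows "\<exists>M. \<forall>m\<ge>M. \<forall>u. level_norm s m (level_semicomm s m G Gi G' Gi' u) \<le> e * level_norm s m u"
proof -
  have Cb0: "0 \<le> Cb" using bGi[of 0] by (rule order_trans[rotated]) simp
  define \<delta> where "\<delta> = min 1 (e / (24 * Cb + 12))"
  have d0: "0 < \<delta>" using e Cb0 by (simp add: \<delta>_def)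
  have de: "\<delta> * (24 * Cb + 12 * \<delta>) \<le> e"
  proof -
    have "\<delta> * (24 * Cb + 12 * \<delta>) \<le> \<delta> * (24 * Cb + 12)" using d0 by (intro mult_left_mono) (auto simp: \<delta>_def)
    also have "\<dots> \<le> e"
    proof -
      have "\<delta> \<le> e / (24 * Cb + 12)" by (simp add: \<delta>_def)
      thus ?thesis using Cb0 by (simp add: field_simps)
    qed
    finally show ?thesis .
  qed
  obtain N K H Hi N' K' H' Hi' where "local_stationary_approx s \<delta> G Gi N K H Hi"
    and "local_stationary_approx s \<delta> G' Gi' N' K' H' Hi'"
    using A[OF d0] A'[OF d0] by blast
  hence "local_stationary_approx s \<delta> G Gi (N + N') (K + K') H Hi"
    and "local_stationary_approx s \<delta> G' Gi' (N + N') (K + K') H' Hi'"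
    by (auto elim: local_stationary_approx_mono[rotated 2])
  hence "level_norm s m (level_semicomm s m G Gi G' Gi' u) \<le> e * level_norm s m u"
    if "N + N' + (K + K') \<le> m" for m u
    using level_semicomm_norm_le[OF s that _ bG bGi bG' bGi'] d0 de
    by (meson less_imp_le level_norm_nonneg mult_right_mono order_trans)
  thus ?thesis by blast
qed
section \<open>Continuous functions on \<open>\<int>\<^sub>s\<close>\<close>

lemma topspace_Zs: "topspace (Zs_top s) = {z. \<forall>i. z i < s}"
  by (auto simp: Zs_top_def topspace_product_topology PiE_iff)

lemma zs_of_in_topspace: "0 < s \<Longrightarrow> zs_of s y \<in> topspace (Zs_top s)"
  by (simp add: topspace_Zs zs_of_def)

lemma zs_of_mod_power:
  assumes s: "0 < s" and i: "i < K"
  shows "zs_of s (y mod s^K) i = zs_of s y i"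
proof -
  have sK: "s^K = s^i * s^(K-i)" using i by (simp add: power_add[symmetric])
  have "y mod s^K = s^i * (y div s^i mod s^(K-i)) + y mod s^i"
    unfolding sK by (rule mod_mult2_eq)
  hence "y mod s^K div s^i = y div s^i mod s^(K-i)"
    using s by simp
  moreover have "y div s^i mod s^(K-i) mod s = y div s^i mod s"
    using i by (simp add: mod_mod_cancel dvd_power)
  ultimately show ?thesis by (simp add: zs_of_def)
qed

lemma compact_space_Zs: "compact_space (Zs_top s)"
  unfolding Zs_top_def compact_space_product_topology
  by (simp add: compact_space_discrete_topology)

definition cylinder :: "nat \<Rightarrow> (nat \<Rightarrow> nat) \<Rightarrow> nat \<Rightarrow> (nat \<Rightarrow> nat) set" where
  "cylinder s z k = {w \<in> topspace (Zs_top s). \<forall>i<k. w i = z i}"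

lemma openin_cylinder:
  assumes z: "z \<in> topspace (Zs_top s)"
  shows "openin (Zs_top s) (cylinder s z k)"
  unfolding Zs_top_def openin_product_topology_alt
proof (intro ballI)
  fix x assume x: "x \<in> cylinder s z k"
  let ?U = "\<lambda>i. if i < k then {z i} else {..<s}"
  have zs: "\<And>i. z i < s" using z by (simp add: topspace_Zs)
  show "\<exists>U. finite {i \<in> UNIV. U i \<noteq> topspace (discrete_topology {..<s})} \<and>
          (\<forall>i\<in>UNIV. openin (discrete_topology {..<s}) (U i)) \<and> x \<in> Pi\<^sub>E UNIV U \<and> Pi\<^sub>E UNIV U \<subseteq> cylinder s z k"
  proof (intro exI conjI)
    show "finite {i \<in> UNIV. ?U i \<noteq> topspace (discrete_topology {..<s})}"
      by (rule finite_subset[of _ "{..<k}"]) auto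
    show "\<forall>i\<in>UNIV. openin (discrete_topology {..<s}) (?U i)" using zs by auto
    show "x \<in> Pi\<^sub>E UNIV ?U" using x by (auto simp: cylinder_def topspace_Zs)
    show "Pi\<^sub>E UNIV ?U \<subseteq> cylinder s z k"
    proof
      fix w assume w: "w \<in> Pi\<^sub>E UNIV ?U"
      have wi: "w i \<in> (if i < k then {z i} else {..<s})" for i using w by (simp add: PiE_iff)
      have "w i < s" for i using wi[of i] zs[of i] by (cases "i < k") auto
      moreover have "w i = z i" if "i < k" for i using wi[of i] that by simp
      ultimately show "w \<in> cylinder s z k" by (auto simp: cylinder_def topspace_Zs)
    qed
  qed
qed

lemma continuous_map_Zs_cylinder:
  assumes f: "continuous_map (Zs_top s) euclidean (f :: (nat \<Rightarrow> nat) \<Rightarrow> complex)"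
    and z: "z \<in> topspace (Zs_top s)" and e: "0 < e"
  shows "\<exists>k. \<forall>w\<in>cylinder s z k. cmod (f w - f z) < e"
proof -
  have op: "openin (Zs_top s) {x \<in> topspace (Zs_top s). f x \<in> ball (f z) e}"
    by (rule openin_continuous_map_preimage[OF f]) simp
  have "z \<in> {x \<in> topspace (Zs_top s). f x \<in> ball (f z) e}" using z e by simp
  then obtain U where U: "finite {i \<in> UNIV. U i \<noteq> topspace (discrete_topology {..<s})}"
      "z \<in> Pi\<^sub>E UNIV U" "Pi\<^sub>E UNIV U \<subseteq> {x \<in> topspace (Zs_top s). f x \<in> ball (f z) e}"
    using op unfolding Zs_top_def openin_product_topology_alt by blast
  obtain k where k: "{i \<in> UNIV. U i \<noteq> {..<s}} \<subseteq> {..<k}"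
    using finite_nat_bounded[OF U(1)] by auto
  have "cylinder s z k \<subseteq> Pi\<^sub>E UNIV U"
  proof
    fix w assume w: "w \<in> cylinder s z k"
    have "w i \<in> U i" for i
    proof (cases "i < k")
      case True thus ?thesis using w U(2) by (auto simp: cylinder_def PiE_iff)
    next
      case False
      hence "U i = {..<s}" using k by auto
      thus ?thesis using w by (auto simp: cylinder_def topspace_Zs)
    qed
    thus "w \<in> Pi\<^sub>E UNIV U" by (simp add: PiE_iff)
  qed
  hence "\<forall>w\<in>cylinder s z k. cmod (f w - f z) < e" using U(3) by (force simp: dist_norm norm_minus_commute)
  thus ?thesis by blast
qed

lemma continuous_map_Zs_uniform:
  assumes f: "continuous_map (Zs_top s) euclidean (f :: (nat \<Rightarrow> nat) \<Rightarrow> complex)" and e: "0 < e"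
  shows "\<exists>K. \<forall>z\<in>topspace (Zs_top s). \<forall>z'\<in>topspace (Zs_top s). (\<forall>i<K. z i = z' i) \<longrightarrow> cmod (f z - f z') < e"
proof -
  have e2: "0 < e/2" using e by simp
  have "\<forall>z\<in>topspace (Zs_top s). \<exists>k. \<forall>w\<in>cylinder s z k. cmod (f w - f z) < e/2"
    using continuous_map_Zs_cylinder[OF f _ e2] by blast
  then obtain kz where kz: "\<And>z w. z \<in> topspace (Zs_top s) \<Longrightarrow> w \<in> cylinder s z (kz z) \<Longrightarrow> cmod (f w - f z) < e/2"
    by metis
  have cpt: "compactin (Zs_top s) (topspace (Zs_top s))" using compact_space_Zs by (simp add: compact_space_def)
  have cov: "topspace (Zs_top s) \<subseteq> \<Union> ((\<lambda>z. cylinder s z (kz z)) ` topspace (Zs_top s))"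
    by (auto simp: cylinder_def)
  have opn: "\<forall>u\<in>(\<lambda>z. cylinder s z (kz z)) ` topspace (Zs_top s). openin (Zs_top s) u"
    using openin_cylinder by blast
  obtain F where F: "finite F" "F \<subseteq> (\<lambda>z. cylinder s z (kz z)) ` topspace (Zs_top s)" "topspace (Zs_top s) \<subseteq> \<Union>F"
    using cpt cov opn unfolding compactin_def by meson
  obtain Z where Z: "Z \<subseteq> topspace (Zs_top s)" "finite Z" "F = (\<lambda>z. cylinder s z (kz z)) ` Z"
    using finite_subset_image[OF F(1) F(2)] by blast
  define K where "K = (\<Sum>z\<in>Z. kz z)"
  show ?thesis
  proof (intro exI ballI impI)
    fix z z' assume z: "z \<in> topspace (Zs_top s)" and z': "z' \<in> topspace (Zs_top s)" and ag: "\<forall>i<K. z i = z' i"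
    obtain c where c: "c \<in> Z" "z \<in> cylinder s c (kz c)" using F(3) Z(3) z by auto
    have le: "kz c \<le> K" unfolding K_def by (rule member_le_sum) (use c Z in auto)
    have "z' \<in> cylinder s c (kz c)" using c(2) ag le z' by (auto simp: cylinder_def)
    hence "cmod (f z' - f c) < e/2" using kz Z c by blast
    moreover have "cmod (f z - f c) < e/2" using kz Z c by blast
    ultimately have "cmod (f z - f z') < e/2 + e/2"
      using norm_triangle_ineq4[of "f z - f c" "f z' - f c"] by (simp add: norm_minus_commute) 
    thus "cmod (f z - f z') < e" by simp
  qed
qed

lemma continuous_map_Zs_bounded:
  assumes f: "continuous_map (Zs_top s) euclidean (f :: (nat \<Rightarrow> nat) \<Rightarrow> complex)"
  shows "\<exists>B. 0 \<le> B \<and> (\<forall>z\<in>topspace (Zs_top s). cmod (f z) \<le> B)"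
proof -
  have "compactin euclidean (f ` topspace (Zs_top s))"
    by (rule image_compactin[OF _ f]) (use compact_space_Zs in \<open>simp add: compact_space_def\<close>)
  hence "bounded (f ` topspace (Zs_top s))" by (simp add: compact_imp_bounded)
  then obtain B where "\<forall>x\<in>f ` topspace (Zs_top s). norm x \<le> B" by (auto simp: bounded_iff)
  hence "\<forall>z\<in>topspace (Zs_top s). cmod (f z) \<le> max 0 B" by auto
  thus ?thesis by (intro exI[of _ "max 0 B"]) auto
qed

lemma uniform_limit_imp_glim:
  assumes L: "\<forall>e>0. \<exists>N. \<forall>n\<ge>N. \<forall>z\<in>topspace (Zs_top s). cmod (g n z - L z) < e"
    and z: "z \<in> topspace (Zs_top s)"
  shows "(\<lambda>n. g n z) \<longlonglongrightarrow> L z" and "glim g z = L z"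
proof -
  show lim: "(\<lambda>n. g n z) \<longlonglongrightarrow> L z"
  proof (rule LIMSEQ_I)
    fix r :: real assume "0 < r"
    then obtain N where "\<forall>n\<ge>N. \<forall>z\<in>topspace (Zs_top s). cmod (g n z - L z) < r" using L by blast
    thus "\<exists>no. \<forall>n\<ge>no. norm (g n z - L z) < r" using z by blast
  qed
  thus "glim g z = L z" by (simp add: glim_def limI)
qed

lemma cseq_glim:
  assumes "cseq s g"
  shows "continuous_map (Zs_top s) euclidean (glim g)"
    and "\<forall>e>0. \<exists>N. \<forall>n\<ge>N. \<forall>z\<in>topspace (Zs_top s). cmod (g n z - glim g z) < e"
proof -
  obtain L where L: "continuous_map (Zs_top s) euclidean L"
    "\<forall>e>0. \<exists>N. \<forall>n\<ge>N. \<forall>z\<in>topspace (Zs_top s). cmod (g n z - L z) < e"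
    using assms by (auto simp: cseq_def)
  have eq: "z \<in> topspace (Zs_top s) \<Longrightarrow> L z = glim g z" for z
    using uniform_limit_imp_glim(2)[OF L(2)] by simp
  show "continuous_map (Zs_top s) euclidean (glim g)" by (rule continuous_map_eq[OF L(1) eq])
  show "\<forall>e>0. \<exists>N. \<forall>n\<ge>N. \<forall>z\<in>topspace (Zs_top s). cmod (g n z - glim g z) < e"
    using L(2) by (simp add: eq)
qed

lemma glim_tendsto: "cseq s g \<Longrightarrow> z \<in> topspace (Zs_top s) \<Longrightarrow> (\<lambda>n. g n z) \<longlonglongrightarrow> glim g z"
  by (rule uniform_limit_imp_glim(1)[OF cseq_glim(2)])

lemma glim_mult:
  assumes g: "cseq s g" and g': "cseq s g'" and z: "z \<in> topspace (Zs_top s)"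
  shows "glim (\<lambda>n z. g n z * g' n z) z = glim g z * glim g' z"
proof -
  have "(\<lambda>n. g n z * g' n z) \<longlonglongrightarrow> glim g z * glim g' z"
    by (intro tendsto_mult glim_tendsto[OF g z] glim_tendsto[OF g' z])
  thus ?thesis by (simp add: glim_def limI)
qed

lemma continuous_map_Zs_uniform_finite:
  fixes n :: nat
  assumes F: "\<And>i. i < n \<Longrightarrow> continuous_map (Zs_top s) euclidean (F i :: (nat \<Rightarrow> nat) \<Rightarrow> complex)" and e: "0 < e"
  shows "\<exists>K. \<forall>i<n. \<forall>z\<in>topspace (Zs_top s). \<forall>z'\<in>topspace (Zs_top s). (\<forall>j<K. z j = z' j) \<longrightarrow> cmod (F i z - F i z') < e"
  using F
proof (induction n)
  case 0 thus ?case by auto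
next
  case (Suc n)
  obtain K1 where K1: "\<forall>i<n. \<forall>z\<in>topspace (Zs_top s). \<forall>z'\<in>topspace (Zs_top s). (\<forall>j<K1. z j = z' j) \<longrightarrow> cmod (F i z - F i z') < e"
    using Suc by auto
  obtain K2 where K2: "\<forall>z\<in>topspace (Zs_top s). \<forall>z'\<in>topspace (Zs_top s). (\<forall>j<K2. z j = z' j) \<longrightarrow> cmod (F n z - F n z') < e"
    using continuous_map_Zs_uniform[OF Suc.prems[of n] e] by auto
  show ?case
  proof (intro exI[of _ "K1 + K2"] allI impI ballI)
    fix i z z' assume i: "i < Suc n" and z: "z \<in> topspace (Zs_top s)" and z': "z' \<in> topspace (Zs_top s)"
      and ag: "\<forall>j<K1 + K2. z j = z' j"
    show "cmod (F i z - F i z') < e"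
    proof (cases "i < n")
      case True thus ?thesis using K1 z z' ag by auto
    next
      case False hence "i = n" using i by simp
      thus ?thesis using K2 z z' ag by auto
    qed
  qed
qed

lemma cseq_bounded:
  assumes g: "cseq s g"
  obtains Cb where "\<And>n z. z \<in> topspace (Zs_top s) \<Longrightarrow> cmod (g n z) \<le> Cb"
    and "\<And>z. z \<in> topspace (Zs_top s) \<Longrightarrow> cmod (glim g z) \<le> Cb"
proof -
  obtain N where N: "\<forall>n\<ge>N. \<forall>z\<in>topspace (Zs_top s). cmod (g n z - glim g z) < 1"
    using cseq_glim(2)[OF g] by fastforce
  have "\<forall>n. \<exists>B. \<forall>z\<in>topspace (Zs_top s). cmod (g n z) \<le> B"
    using continuous_map_Zs_bounded g unfolding cseq_def by metis
  then obtain B where B: "\<And>n z. z \<in> topspace (Zs_top s) \<Longrightarrow> cmod (g n z) \<le> B n"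
    by (metis choice)
  obtain BL where BL: "\<And>z. z \<in> topspace (Zs_top s) \<Longrightarrow> cmod (glim g z) \<le> BL"
    using continuous_map_Zs_bounded[OF cseq_glim(1)[OF g]] by blast
  have "cmod (g n z) \<le> (\<Sum>n<N. \<bar>B n\<bar>) + BL + 1" if z: "z \<in> topspace (Zs_top s)" for n z
  proof (cases "n < N")
    case True
    have "B n \<le> (\<Sum>n<N. \<bar>B n\<bar>)"
      using member_le_sum[of n "{..<N}" "\<lambda>n. \<bar>B n\<bar>"] True by simp
    thus ?thesis using B[of z n, OF z] BL[OF z] norm_ge_zero[of "glim g z"] by linarith
  next
    case False
    have "cmod (g n z) \<le> cmod (glim g z) + cmod (g n z - glim g z)" by (rule norm_triangle_sub)
    moreover have "0 \<le> (\<Sum>n<N. \<bar>B n\<bar>)" by (simp add: sum_nonneg)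
    moreover have "cmod (g n z - glim g z) < 1" using N False z by auto
    ultimately show ?thesis using BL[OF z] by linarith
  qed
  moreover have "cmod (glim g z) \<le> (\<Sum>n<N. \<bar>B n\<bar>) + BL + 1" if "z \<in> topspace (Zs_top s)" for z
  proof -
    have "0 \<le> (\<Sum>n<N. \<bar>B n\<bar>)" by (simp add: sum_nonneg)
    thus ?thesis using BL[OF that] by linarith
  qed
  ultimately show ?thesis using that by blast
qed

lemma cseq_local_stationary_approx:
  assumes g: "cseq s g" and s: "0 < s" and d: "0 < \<delta>"
  shows "\<exists>N K H Hi. local_stationary_approx s \<delta> (\<lambda>n y. g n (zs_of s y)) (\<lambda>y. glim g (zs_of s y)) N K H Hi"
proof -
  let ?L = "glim g" and ?X = "topspace (Zs_top s)"
  obtain N where N: "\<forall>n\<ge>N. \<forall>z\<in>?X. cmod (g n z - ?L z) < \<delta>/2"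
    using cseq_glim(2)[OF g] d by (meson half_gt_zero)
  let ?F = "\<lambda>i. if i < N then g i else ?L"
  have Fc: "continuous_map (Zs_top s) euclidean (?F i)" for i
    using g cseq_glim(1)[OF g] by (auto simp: cseq_def)
  obtain K where K: "\<forall>i<Suc N. \<forall>z\<in>?X. \<forall>z'\<in>?X. (\<forall>j<K. z j = z' j) \<longrightarrow> cmod (?F i z - ?F i z') < \<delta>/2"
    using continuous_map_Zs_uniform_finite[where s=s and F="?F" and n="Suc N", OF Fc half_gt_zero[OF d]]
    by blast
  define H where "H = (\<lambda>n y. ?F n (zs_of s (y mod s^K)))"
  define Hi where "Hi = (\<lambda>y. ?L (zs_of s (y mod s^K)))"
  have close: "cmod (?F i (zs_of s y) - ?F i (zs_of s (y mod s^K))) < \<delta>/2" if "i \<le> N" for i y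
    using K zs_of_in_topspace[OF s] zs_of_mod_power[OF s] that by (simp add: less_Suc_eq_le)
  have "local_stationary_approx s \<delta> (\<lambda>n y. g n (zs_of s y)) (\<lambda>y. ?L (zs_of s y)) N K H Hi"
    unfolding local_stationary_approx_def
  proof (intro conjI allI impI)
    show "depends_on_digits s K (H n)" for n by (simp add: depends_on_digits_def H_def)
    show "depends_on_digits s K Hi" by (simp add: depends_on_digits_def Hi_def)
    show "H n = Hi" if "N \<le> n" for n using that by (simp add: H_def Hi_def fun_eq_iff)
    show "cmod (?L (zs_of s y) - Hi y) \<le> \<delta>" for y
      using close[of N y] d unfolding Hi_def by simp
    show "cmod (g n (zs_of s y) - H n y) \<le> \<delta>" for n y
    proof (cases "n < N")
      case True thus ?thesis using close[of n y] d by (simp add: H_def)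
    next
      case False
      let ?z = "zs_of s y" and ?z' = "zs_of s (y mod s^K)"
      have "cmod (g n ?z - ?L ?z') \<le> cmod (g n ?z - ?L ?z) + cmod (?L ?z - ?L ?z')"
        using norm_triangle_ineq[of "g n ?z - ?L ?z" "?L ?z - ?L ?z'"] by simp
      moreover have "cmod (g n ?z - ?L ?z) < \<delta>/2" using N False zs_of_in_topspace[OF s] by simp
      moreover have "cmod (?L ?z - ?L ?z') < \<delta>/2" using close[of N y] by simp
      moreover have "H n y = ?L ?z'" using False by (simp add: H_def)
      ultimately show ?thesis by simp
    qed
  qed
  thus ?thesis by blast
qed
section \<open>The semicommutator of \<open>T\<^sub>W\<close>\<close>

lemma TW_semicomm_on_level:
  assumes s: "0 < s" and g: "cseq s g" and g': "cseq s g'" and v: "inH s v"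
  shows "(TW s g (TW s g' v) - TW s (\<lambda>n z. g n z * g' n z) v) (m, y) =
    level_semicomm s m (\<lambda>n y. g n (zs_of s y)) (\<lambda>y. glim g (zs_of s y))
      (\<lambda>n y. g' n (zs_of s y)) (\<lambda>y. glim g' (zs_of s y)) (\<lambda>y. v (m, y)) y"
proof (cases "y < s^m")
  case True
  have prod: "glim (\<lambda>n z. g n z * g' n z) (zs_of s x) = glim g (zs_of s x) * glim g' (zs_of s x)" for x
    by (rule glim_mult[OF g g' zs_of_in_topspace[OF s]])
  have "TW s g (TW s g' v) (m, y)
      = level_TW s m (\<lambda>n y. g n (zs_of s y)) (\<lambda>y. glim g (zs_of s y)) (\<lambda>y. TW s g' v (m, y)) y"
    by (rule TW_on_level[OF s True])
  also have "\<dots> = level_TW s m (\<lambda>n y. g n (zs_of s y)) (\<lambda>y. glim g (zs_of s y))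
      (level_TW s m (\<lambda>n y. g' n (zs_of s y)) (\<lambda>y. glim g' (zs_of s y)) (\<lambda>y. v (m, y))) y"
    by (rule level_TW_cong[OF _ True]) (rule TW_on_level[OF s])
  finally show ?thesis
    using TW_on_level[OF s True, of "\<lambda>n z. g n z * g' n z" v] True by (simp add: prod level_semicomm_def)
next
  case False
  have "v (m, y) = 0" using v False by (simp add: inH_iff_levels)
  thus ?thesis using False by (simp add: TW_outside level_semicomm_def)
qed

lemma TW_semicomm_levelwise:
  assumes s: "0 < s" and g: "cseq s g" and g': "cseq s g'"
  shows "\<exists>C. levelwise_op s (\<lambda>v. TW s g (TW s g' v) - TW s (\<lambda>n z. g n z * g' n z) v)
    (\<lambda>m. level_semicomm s m (\<lambda>n y. g n (zs_of s y)) (\<lambda>y. glim g (zs_of s y))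
      (\<lambda>n y. g' n (zs_of s y)) (\<lambda>y. glim g' (zs_of s y))) C"
proof -
  obtain Cb1 where b1: "\<And>n z. z \<in> topspace (Zs_top s) \<Longrightarrow> cmod (g n z) \<le> Cb1"
    "\<And>z. z \<in> topspace (Zs_top s) \<Longrightarrow> cmod (glim g z) \<le> Cb1"
    using cseq_bounded[OF g] by blast
  obtain Cb2 where b2: "\<And>n z. z \<in> topspace (Zs_top s) \<Longrightarrow> cmod (g' n z) \<le> Cb2"
    "\<And>z. z \<in> topspace (Zs_top s) \<Longrightarrow> cmod (glim g' z) \<le> Cb2"
    using cseq_bounded[OF g'] by blast
  define Cb where "Cb = max Cb1 Cb2"
  have zs: "zs_of s y \<in> topspace (Zs_top s)" for y by (rule zs_of_in_topspace[OF s])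
  have bG: "cmod (g n (zs_of s y)) \<le> Cb" "cmod (g' n (zs_of s y)) \<le> Cb" for n y
    using b1(1)[OF zs] b2(1)[OF zs] unfolding Cb_def by (meson max.coboundedI1 max.coboundedI2)+
  have bGi: "cmod (glim g (zs_of s y)) \<le> Cb" "cmod (glim g' (zs_of s y)) \<le> Cb" for y
    using b1(2)[OF zs] b2(2)[OF zs] unfolding Cb_def by (meson max.coboundedI1 max.coboundedI2)+
  show ?thesis
  proof (intro exI[of _ "12 * Cb^2"] levelwise_op.intro)
    show "(TW s g (TW s g' v) - TW s (\<lambda>n z. g n z * g' n z) v) (m, y) =
      level_semicomm s m (\<lambda>n y. g n (zs_of s y)) (\<lambda>y. glim g (zs_of s y))
        (\<lambda>n y. g' n (zs_of s y)) (\<lambda>y. glim g' (zs_of s y)) (\<lambda>y. v (m, y)) y" if "inH s v" for v m y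
      by (rule TW_semicomm_on_level[OF s g g' that])
  qed (simp_all add: level_semicomm_def level_semicomm_lincomb
      level_semicomm_norm_bound[OF s bG(1) bGi(1) bG(2) bGi(2)]
      level_semicomm_decay[OF s _ bG(1) bGi(1) bG(2) bGi(2) cseq_local_stationary_approx[OF g s]
        cseq_local_stationary_approx[OF g' s]])
qed

theorem proposition7p5:
  fixes s :: nat and g g' :: "nat \<Rightarrow> (nat \<Rightarrow> nat) \<Rightarrow> complex"
  assumes "s \<ge> 2" and "cseq s g" and "cseq s g'"
  shows "compact_inv s (\<lambda>v. TW s g (TW s g' v) - TW s (\<lambda>n z. g n z * g' n z) v)"
proof -
  have "0 < s" using assms(1) by simp
  then obtain C where "levelwise_op s (\<lambda>v. TW s g (TW s g' v) - TW s (\<lambda>n z. g n z * g' n z) v)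
      (\<lambda>m. level_semicomm s m (\<lambda>n y. g n (zs_of s y)) (\<lambda>y. glim g (zs_of s y))
        (\<lambda>n y. g' n (zs_of s y)) (\<lambda>y. glim g' (zs_of s y))) C"
    using TW_semicomm_levelwise assms(2,3) by blast
  thus ?thesis by (rule levelwise_op.compact_inv_T)
qed

end
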